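(* Let $m\ge1$, $0=c_1<c_2<\cdots<c_m$ be fixed, $\vec c=(c_1,\dots,c_m)$, and for $x\in\mathbb{R}$ put $t_k=c_k+x$ ($k=1,\dots,m$). Let $\omega_0,\dots,\omega_m$ be real with $\sum_{k=0}^\ell\omega_k\ge0$ for $\ell=0,\dots,m$, such that $w(s)={\rm e}^{-s^2}\big(\omega_0+\sum_{k=1}^m\omega_k\theta(s-t_k)\big)$ is not identically zero. Let $D_n(x;\vec c)=\det\big(\int_{\mathbb{R}}s^{i+j}w(s)ds\big)_{i,j=0}^{n-1}$ ($D_0:=1$), $\hat D_n(x;\vec c):={\rm e}^{nx^2}D_n(x;\vec c)$, and let $R_{n,k}(x;\vec c)$ be as in the context. Then for $n\ge1$: (i) $$\frac{d^2}{dx^2}\ln\hat D_n=4\frac{\hat D_{n+1}\hat D_{n-1}}{\hat D_n^2};$$ (ii) for each $k=1,\dots,m$, wherever $R_{n,k}\ne0$, $$\frac{d^2R_{n,k}}{dx^2}-\frac{1}{2R_{n,k}}\Big(\frac{dR_{n,k}}{dx}\Big)^2=R_{n,k}\Bigg[\frac32\Big(\sum_{j=1}^mR_{n,j}\Big)^2-2\sum_{j=1}^m(c_k+c_j+2x)R_{n,j}+2\big((c_k+x)^2-2n-1\big)\Bigg];$$ (iii) if $R_{n,k}(y;\vec c)\ne0$ for all $k$ and all $y$ between $0$ and $x$, then $$\frac{\hat D_n(x;\vec c)}{\hat D_n(0;\vec c)}={\rm e}^{nx^2}\exp\Bigg[\frac14\int_0^x\Bigg(-\sum_{k=1}^m\frac{(R_{n,k}')^2}{2R_{n,k}}+\frac12\Big(\sum_{k=1}^mR_{n,k}\Big)^3+\sum_{k=1}^m2(c_k+y)^2R_{n,k}-\Big(\sum_{k=1}^m2(c_k+y)R_{n,k}+4n\Big)\sum_{j=1}^mR_{n,j}\Bigg)dy\Bigg],$$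 where in the integrand $R_{n,k}=R_{n,k}(y;\vec c)$ and $'=d/dy$.
   Context: $\theta(y)=1$ for $y>0$ and $0$ otherwise. $P_n(z)$ is the monic degree-$n$ polynomial orthogonal w.r.t. $w$ on $\mathbb{R}$ (which depends on $x$ through the $t_k$), $\int P_jP_kw\,ds=h_k\delta_{jk}$, $h_k>0$. $R_{n,k}(x;\vec c):=\omega_k{\rm e}^{-t_k^2}P_n(t_k)^2/h_n$ with $t_k=c_k+x$. *)

theory Defs
  imports "HOL-Analysis.Analysis" "HOL-Computational_Algebra.Polynomial"
begin

definition theta :: "real \<Rightarrow> real" where
  "theta y = (if y > 0 then 1 else 0)"

definition weight :: "nat \<Rightarrow> (nat \<Rightarrow> real) \<Rightarrow> (nat \<Rightarrow> real) \<Rightarrow> real \<Rightarrow> real \<Rightarrow> real" where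
  "weight m c \<omega> x s = exp (- (s\<^sup>2)) * (\<omega> 0 + (\<Sum>k=1..m. \<omega> k * theta (s - (c k + x))))"

definition moment :: "nat \<Rightarrow> (nat \<Rightarrow> real) \<Rightarrow> (nat \<Rightarrow> real) \<Rightarrow> real \<Rightarrow> nat \<Rightarrow> real" where
  "moment m c \<omega> x j = (LINT s|lborel. s ^ j * weight m c \<omega> x s)"

text \<open>Determinant of the n x n Hankel matrix (a (i+j)), i,j < n, by the Leibniz formula
  (empty determinant = 1).\<close>
definition hankel_det :: "nat \<Rightarrow> (nat \<Rightarrow> real) \<Rightarrow> real" where
  "hankel_det n a = (\<Sum>p | p permutes {..<n}. of_int (sign p) * (\<Prod>i<n. a (i + p i)))"

definition Dn :: "nat \<Rightarrow> (nat \<Rightarrow> real) \<Rightarrow> (nat \<Rightarrow> real) \<Rightarrow> nat \<Rightarrow> real \<Rightarrow> real" where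
  "Dn m c \<omega> n x = hankel_det n (moment m c \<omega> x)"

definition Dhat :: "nat \<Rightarrow> (nat \<Rightarrow> real) \<Rightarrow> (nat \<Rightarrow> real) \<Rightarrow> nat \<Rightarrow> real \<Rightarrow> real" where
  "Dhat m c \<omega> n x = exp (real n * x\<^sup>2) * Dn m c \<omega> n x"

definition orth_poly :: "nat \<Rightarrow> (nat \<Rightarrow> real) \<Rightarrow> (nat \<Rightarrow> real) \<Rightarrow> real \<Rightarrow> nat \<Rightarrow> real poly" where
  "orth_poly m c \<omega> x n = (THE p. lead_coeff p = 1 \<and> degree p = n \<and>
     (\<forall>q :: real poly. degree q < n \<longrightarrow>
        (LINT s|lborel. poly p s * poly q s * weight m c \<omega> x s) = 0))"

definition hnorm :: "nat \<Rightarrow> (nat \<Rightarrow> real) \<Rightarrow> (nat \<Rightarrow> real) \<Rightarrow> real \<Rightarrow> nat \<Rightarrow> real" where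
  "hnorm m c \<omega> x n = (LINT s|lborel. (poly (orth_poly m c \<omega> x n) s)\<^sup>2 * weight m c \<omega> x s)"

definition Rnk :: "nat \<Rightarrow> (nat \<Rightarrow> real) \<Rightarrow> (nat \<Rightarrow> real) \<Rightarrow> nat \<Rightarrow> nat \<Rightarrow> real \<Rightarrow> real" where
  "Rnk m c \<omega> n k x = \<omega> k * exp (- ((c k + x)\<^sup>2)) * (poly (orth_poly m c \<omega> x n) (c k + x))\<^sup>2
      / hnorm m c \<omega> x n"

end

(*
  The moments of the weight are combinations of the Gaussian tail integrals
  int_t^oo s^j exp(-s^2) ds at the jump points t_k = c_k + x, so x enters only through the
  jumps: the x-derivative of the j-th moment is -sum_k omega_k exp(-t_k^2) t_k^j, and
  integration by parts produces the same jump terms. Build the monic orthogonal polynomials by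
  the three-term recurrence P_(n+1) = (z - alpha_n) P_n - beta_n P_(n-1); then
  D_n = h_0 ... h_(n-1). Differentiating the orthogonality relations in x gives
  h_n' = -2 alpha_n h_n and the ladder relation d/dx P_n + P_n' = 2 beta_n P_(n-1). Hence
  (ln D_n)' = 2 p(n) with p(n) the subleading coefficient of P_n, and p(n)' = 2 beta_n - n,
  where beta_n = h_n / h_(n-1): this is (i).
  For (ii), R_(n,k)' = 2 (alpha_n - t_k) R_(n,k) + 4 r_(n,k) with
  r_(n,k) = omega_k exp(-t_k^2) P_n(t_k) P_(n-1)(t_k) / h_(n-1), so that
  r_(n,k)^2 = beta_n R_(n,k) R_(n-1,k);
  integration by parts against P_n^2, P_n P_(n-1) and z P_n P_(n-1) evaluates
  sum_k R_(n,k) = 2 alpha_n, sum_k r_(n,k) = 2 beta_n - n and sum_k t_k r_(n,k), and eliminating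
  r gives the equation. The same identities reduce the integrand of (iii) to 8 p(n) = 4 (ln D_n)'.
*)

theory Submission
  imports Defs "HOL-Probability.Probability" "Jordan_Normal_Form.Determinant"
begin

section \<open>Gaussian moments and the moments of the weight\<close>

definition gauss_mono :: "nat \<Rightarrow> real \<Rightarrow> real" where
  "gauss_mono j s = exp (- s\<^sup>2) * s ^ j"

definition half_gauss_moment :: "nat \<Rightarrow> real" where
  "half_gauss_moment j =
     (if even j then sqrt pi / 2 * (fact j / (2 ^ j * fact (j div 2))) else fact (j div 2) / 2)"

lemma has_bochner_integral_half_gauss_mono:
  "has_bochner_integral lborel (\<lambda>s. indicator {0..} s *\<^sub>R gauss_mono j s) (half_gauss_moment j)"
proof (cases "even j")
  case True
  then obtain k where k: "j = 2 * k" by (auto elim: evenE)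
  show ?thesis
    using gaussian_moment_even_pos[of k] unfolding gauss_mono_def half_gauss_moment_def k by simp
next
  case False
  then obtain k where k: "j = 2 * k + 1" by (auto elim: oddE)
  show ?thesis
    using gaussian_moment_odd_pos[of k] unfolding gauss_mono_def half_gauss_moment_def k by simp
qed

lemma half_gauss_moment_Suc_Suc:
  "half_gauss_moment (Suc (Suc j)) = (real j + 1) / 2 * half_gauss_moment j"
proof (cases "even j")
  case True
  then obtain k where k: "j = 2 * k" by (auto elim: evenE)
  have fact_j2: "fact (Suc (Suc j)) = (2 * real k + 2) * (2 * real k + 1) * fact (2 * k)"
    by (simp add: k algebra_simps)
  have pow_j2: "(2::real) ^ Suc (Suc j) = 4 * 2 ^ (2 * k)"
    by (simp add: k)
  have fact_half_j2: "fact (Suc (Suc j) div 2) = (real k + 1) * (fact k :: real)"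
    by (simp add: k)
  have cancel: "(2*r+2) * (2*r+1) * F / (4*P*((r+1)*G)) = (2*r+1) / 2 * (F / (P*G))"
    if "P > 0" "G > 0" "r \<ge> 0" for F P G r :: real
    using that by (simp add: divide_simps)
  have "half_gauss_moment (Suc (Suc j))
      = sqrt pi / 2 * ((2 * real k + 2) * (2 * real k + 1) * fact (2 * k)
          / (4 * 2 ^ (2 * k) * ((real k + 1) * fact k)))"
    using True
    by (simp only: half_gauss_moment_def fact_j2 pow_j2 fact_half_j2 even_Suc_Suc_iff if_True)
  also have "\<dots> = (2 * real k + 1) / 2 * (sqrt pi / 2 * (fact (2 * k) / (2 ^ (2 * k) * fact k)))"
    by (simp only: cancel[of "2 ^ (2 * k)" "fact k" "real k"] zero_less_power fact_gt_zero
        of_nat_0_le_iff zero_less_numeral) simp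
  also have "\<dots> = (real j + 1) / 2 * half_gauss_moment j"
    by (simp add: half_gauss_moment_def k)
  finally show ?thesis .
next
  case False
  then obtain k where k: "j = 2 * k + 1" by (auto elim: oddE)
  have "Suc (Suc j) div 2 = Suc k" "j div 2 = k" by (simp_all add: k)
  then show ?thesis
    unfolding half_gauss_moment_def using False by (simp add: k algebra_simps)
qed

lemma half_gauss_moment_recurrence:
  "real j * half_gauss_moment (j - 1) + gauss_mono j 0 = 2 * half_gauss_moment (Suc j)"
proof (cases j)
  case 0
  then show ?thesis by (simp add: half_gauss_moment_def gauss_mono_def)
next
  case (Suc i)
  then show ?thesis by (simp add: half_gauss_moment_Suc_Suc gauss_mono_def)
qed

lemma has_bochner_integral_gauss_mono:
  "has_bochner_integral lborel (gauss_mono j) (if even j then 2 * half_gauss_moment j else 0)"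
proof (cases "even j")
  case True
  have "has_bochner_integral lborel (gauss_mono j) (2 *\<^sub>R half_gauss_moment j)"
    by (rule has_bochner_integral_even_function[OF has_bochner_integral_half_gauss_mono])
      (use True in \<open>simp add: gauss_mono_def\<close>)
  then show ?thesis using True by simp
next
  case False
  have "has_bochner_integral lborel (gauss_mono j) 0"
    by (rule has_bochner_integral_odd_function[OF has_bochner_integral_half_gauss_mono])
      (use False in \<open>simp add: gauss_mono_def\<close>)
  then show ?thesis using False by simp
qed

lemma integrable_gauss_mono: "integrable lborel (gauss_mono j)"
  by (rule integrable.intros[OF has_bochner_integral_gauss_mono])

definition gauss_moment :: "nat \<Rightarrow> real" where
  "gauss_moment j = integral\<^sup>L lborel (gauss_mono j)"

lemma gauss_moment_recurrence: "real j * gauss_moment (j - 1) = 2 * gauss_moment (Suc j)"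
proof -
  have gm: "gauss_moment i = (if even i then 2 * half_gauss_moment i else 0)" for i
    using has_bochner_integral_gauss_mono[of i]
    by (simp add: gauss_moment_def has_bochner_integral_integral_eq)
  show ?thesis
    by (cases j) (auto simp: gm half_gauss_moment_Suc_Suc)
qed

definition gauss_tail :: "nat \<Rightarrow> real \<Rightarrow> real" where
  "gauss_tail j t = (LINT s|lborel. indicator {t<..} s * gauss_mono j s)"

lemma integrable_gauss_tail: "integrable lborel (\<lambda>s. indicator {t<..} s * gauss_mono j s)"
  using integrable_mult_indicator[OF _ integrable_gauss_mono, of "{t<..}" j] by simp

lemma continuous_on_gauss_mono: "continuous_on S (gauss_mono j)"
  unfolding gauss_mono_def by (intro continuous_intros)

lemma interval_lebesgue_integrable_gauss_mono:
  "interval_lebesgue_integrable lborel a b (gauss_mono j)"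
  unfolding interval_lebesgue_integrable_def set_integrable_def
  using integrable_mult_indicator[OF _ integrable_gauss_mono] by auto

lemma gauss_tail_eq_interval_integral:
  "gauss_tail j t = gauss_tail j 0 - (LBINT s=ereal 0..ereal t. gauss_mono j s)"
proof -
  have tail: "gauss_tail j u = (LBINT s=ereal u..\<infinity>. gauss_mono j s)" for u
    by (simp add: gauss_tail_def interval_integral_to_infinity_eq set_lebesgue_integral_def)
  have "(LBINT s=ereal t..ereal 0. gauss_mono j s) + (LBINT s=ereal 0..\<infinity>. gauss_mono j s)
      = (LBINT s=ereal t..\<infinity>. gauss_mono j s)"
    by (intro interval_integral_sum interval_lebesgue_integrable_gauss_mono)
  then show ?thesis unfolding tail
    by (metis interval_integral_endpoints_reverse add.commute diff_conv_add_uminus)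
qed

lemma gauss_tail_has_derivative: "(gauss_tail j has_real_derivative - gauss_mono j t) (at t)"
proof -
  let ?a = "min 0 t - 1" and ?b = "max 0 t + 1"
  have "((\<lambda>u. LBINT y=ereal 0..ereal u. gauss_mono j y) has_vector_derivative gauss_mono j t)
      (at t within {?a..?b})"
    by (rule interval_integral_FTC2) (auto intro: continuous_on_gauss_mono)
  then have "((\<lambda>u. LBINT y=ereal 0..ereal u. gauss_mono j y) has_vector_derivative gauss_mono j t)
      (at t within {?a<..<?b})"
    by (rule has_vector_derivative_within_subset) auto
  moreover have "at t within {?a<..<?b} = at t"
    by (rule at_within_interior) auto
  ultimately have "((\<lambda>u. LBINT y=ereal 0..ereal u. gauss_mono j y) has_real_derivative gauss_mono j t)
      (at t)"
    by (simp add: has_real_derivative_iff_has_vector_derivative)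
  then have "((\<lambda>u. gauss_tail j 0 - (LBINT y=ereal 0..ereal u. gauss_mono j y))
      has_real_derivative 0 - gauss_mono j t) (at t)"
    by (intro derivative_intros)
  then show ?thesis by (subst gauss_tail_eq_interval_integral[abs_def]) simp
qed

lemma gauss_mono_has_derivative:
  "(gauss_mono j has_real_derivative real j * gauss_mono (j - 1) t - 2 * gauss_mono (Suc j) t) (at t)"
proof -
  have "(gauss_mono j has_real_derivative
      exp (- t\<^sup>2) * (- (2 * t)) * t ^ j + exp (- t\<^sup>2) * (real j * t ^ (j - 1))) (at t)"
    unfolding gauss_mono_def[abs_def] by (auto intro!: derivative_eq_intros)
  moreover have "exp (- t\<^sup>2) * (- (2 * t)) * t ^ j + exp (- t\<^sup>2) * (real j * t ^ (j - 1))
      = real j * gauss_mono (j - 1) t - 2 * gauss_mono (Suc j) t"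
    by (simp add: gauss_mono_def algebra_simps)
  ultimately show ?thesis by simp
qed

lemma gauss_tail_0: "gauss_tail j 0 = half_gauss_moment j"
proof -
  have "AE s in lborel. indicator {0<..} s * gauss_mono j s = indicator {0..} s *\<^sub>R gauss_mono j s"
    using AE_lborel_singleton[of 0] by eventually_elim (simp add: indicator_def)
  then have "gauss_tail j 0 = (LINT s|lborel. indicator {0..} s *\<^sub>R gauss_mono j s)"
    unfolding gauss_tail_def
    using integrable_gauss_tail has_bochner_integral_half_gauss_mono[of j]
    by (intro integral_cong_AE) (auto simp: has_bochner_integral_iff)
  then show ?thesis
    using has_bochner_integral_half_gauss_mono[of j] by (simp add: has_bochner_integral_integral_eq)
qed

text \<open>Integration by parts on \<open>(t, \<infinity>)\<close>, obtained by differentiating both sides in \<open>t\<close>.\<close>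

lemma gauss_tail_recurrence:
  "real j * gauss_tail (j - 1) t = 2 * gauss_tail (Suc j) t - gauss_mono j t"
proof -
  define G where "G t = real j * gauss_tail (j - 1) t - 2 * gauss_tail (Suc j) t + gauss_mono j t" for t
  have "(G has_real_derivative
      real j * (- gauss_mono (j - 1) t) - 2 * (- gauss_mono (Suc j) t)
      + (real j * gauss_mono (j - 1) t - 2 * gauss_mono (Suc j) t)) (at t)" for t
    unfolding G_def[abs_def]
    by (intro DERIV_add DERIV_diff DERIV_cmult gauss_tail_has_derivative gauss_mono_has_derivative)
  then have "(G has_real_derivative 0) (at t)" for t by simp
  then have "G t = G 0" by (intro DERIV_isconst_all) auto
  also have "G 0 = 0"
    using half_gauss_moment_recurrence[of j] by (simp add: G_def gauss_tail_0)
  finally show ?thesis by (simp add: G_def)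
qed

lemma theta_shift_eq_indicator: "theta (s - t) = indicator {t<..} s"
  by (simp add: theta_def indicator_def)

lemma moment_integrand_eq:
  "s ^ j * weight m c \<omega> x s =
     \<omega> 0 * gauss_mono j s + (\<Sum>k=1..m. \<omega> k * (indicator {c k + x<..} s * gauss_mono j s))"
proof -
  have "s ^ j * weight m c \<omega> x s
      = \<omega> 0 * gauss_mono j s + (\<Sum>k=1..m. s ^ j * exp (- s\<^sup>2) * (\<omega> k * theta (s - (c k + x))))"
    unfolding weight_def gauss_mono_def by (simp add: algebra_simps sum_distrib_left)
  then show ?thesis
    by (simp add: theta_shift_eq_indicator gauss_mono_def mult_ac)
qed

lemma integrable_moment_integrand: "integrable lborel (\<lambda>s. s ^ j * weight m c \<omega> x s)"
  unfolding moment_integrand_eq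
  by (intro Bochner_Integration.integrable_add integrable_mult_right integrable_gauss_mono
      Bochner_Integration.integrable_sum integrable_gauss_tail)

lemma moment_eq_gauss_tails:
  "moment m c \<omega> x j = \<omega> 0 * gauss_moment j + (\<Sum>k=1..m. \<omega> k * gauss_tail j (c k + x))"
  unfolding moment_def moment_integrand_eq gauss_moment_def gauss_tail_def
  by (simp add: Bochner_Integration.integral_add Bochner_Integration.integral_sum
      integrable_mult_right integrable_gauss_mono integrable_gauss_tail
      Bochner_Integration.integrable_sum)

lemma moment_has_derivative:
  "((\<lambda>x. moment m c \<omega> x j) has_real_derivative
     - (\<Sum>k=1..m. \<omega> k * exp (- (c k + x)\<^sup>2) * (c k + x) ^ j)) (at x)"
proof -
  have "((\<lambda>x. \<omega> 0 * gauss_moment j + (\<Sum>k=1..m. \<omega> k * gauss_tail j (c k + x))) has_real_derivative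
      0 + (\<Sum>k=1..m. \<omega> k * (- gauss_mono j (c k + x) * (0 + 1)))) (at x)"
    by (intro DERIV_add DERIV_const DERIV_sum DERIV_cmult DERIV_chain2[OF gauss_tail_has_derivative]
        DERIV_ident)
  then show ?thesis unfolding moment_eq_gauss_tails[abs_def]
    by (simp add: gauss_mono_def sum_negf algebra_simps)
qed

lemma moment_recurrence:
  "real j * moment m c \<omega> x (j - 1) =
     2 * moment m c \<omega> x (Suc j) - (\<Sum>k=1..m. \<omega> k * exp (- (c k + x)\<^sup>2) * (c k + x) ^ j)"
proof -
  have "real j * moment m c \<omega> x (j - 1) = \<omega> 0 * (real j * gauss_moment (j - 1))
      + (\<Sum>k=1..m. \<omega> k * (real j * gauss_tail (j - 1) (c k + x)))"
    unfolding moment_eq_gauss_tails by (simp add: algebra_simps sum_distrib_left)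
  also have "\<dots> = \<omega> 0 * (2 * gauss_moment (Suc j))
      + (\<Sum>k=1..m. \<omega> k * (2 * gauss_tail (Suc j) (c k + x) - gauss_mono j (c k + x)))"
    unfolding gauss_moment_recurrence gauss_tail_recurrence ..
  also have "\<dots> = 2 * moment m c \<omega> x (Suc j) - (\<Sum>k=1..m. \<omega> k * gauss_mono j (c k + x))"
    unfolding moment_eq_gauss_tails by (simp add: algebra_simps sum_distrib_left sum_subtractf)
  finally show ?thesis by (simp add: gauss_mono_def algebra_simps)
qed

section \<open>The moment functional\<close>

lemma poly_eq_sum_le_degree_bound:
  fixes p :: "'a::comm_semiring_1 poly"
  assumes "degree p \<le> N"
  shows "poly p x = (\<Sum>i\<le>N. coeff p i * x ^ i)"
proof -
  have "poly p x = (\<Sum>i\<le>degree p. coeff p i * x ^ i)" by (rule poly_altdef)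
  also have "\<dots> = (\<Sum>i\<le>N. coeff p i * x ^ i)"
    by (rule sum.mono_neutral_left) (use assms in \<open>auto simp: coeff_eq_0\<close>)
  finally show ?thesis .
qed

locale step_weight =
  fixes m :: nat and c \<omega> :: "nat \<Rightarrow> real"
begin

abbreviation mu :: "real \<Rightarrow> nat \<Rightarrow> real" where
  "mu x i \<equiv> moment m c \<omega> x i"

definition wint :: "real \<Rightarrow> real poly \<Rightarrow> real" where
  "wint x q = (LINT s|lborel. poly q s * weight m c \<omega> x s)"

definition tk :: "nat \<Rightarrow> real \<Rightarrow> real" where
  "tk k x = c k + x"

definition weight_jump :: "nat \<Rightarrow> real \<Rightarrow> real" where
  "weight_jump k x = \<omega> k * exp (- (tk k x)\<^sup>2)"

lemma poly_weight_eq_moment_integrands: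
  assumes "degree q \<le> N"
  shows "poly q s * weight m c \<omega> x s = (\<Sum>i\<le>N. coeff q i * (s ^ i * weight m c \<omega> x s))"
  unfolding poly_eq_sum_le_degree_bound[OF assms] by (simp add: sum_distrib_right mult.assoc)

lemma integrable_poly_weight: "integrable lborel (\<lambda>s. poly q s * weight m c \<omega> x s)"
  unfolding poly_weight_eq_moment_integrands[OF order.refl]
  by (intro Bochner_Integration.integrable_sum integrable_mult_right integrable_moment_integrand)

lemma wint_eq_moments:
  assumes "degree q \<le> N"
  shows "wint x q = (\<Sum>i\<le>N. coeff q i * mu x i)"
  unfolding wint_def poly_weight_eq_moment_integrands[OF assms] moment_def
  by (subst Bochner_Integration.integral_sum)
    (auto intro!: integrable_mult_right integrable_moment_integrand)

lemma wint_add: "wint x (p + q) = wint x p + wint x q"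
proof -
  let ?N = "degree p + degree q"
  have "degree (p + q) \<le> ?N" using degree_add_le[of p ?N q] by auto
  then show ?thesis
    using wint_eq_moments[of p ?N] wint_eq_moments[of q ?N] wint_eq_moments[of "p + q" ?N]
    by (simp add: sum.distrib algebra_simps)
qed

lemma wint_smult: "wint x (Polynomial.smult a p) = a * wint x p"
  using wint_eq_moments[of p "degree p"] wint_eq_moments[of "Polynomial.smult a p" "degree p"]
  by (simp add: sum_distrib_left algebra_simps)

lemma wint_diff: "wint x (p - q) = wint x p - wint x q"
  using wint_add[of x p "-q"] wint_smult[of x "-1" q] by simp

lemma wint_0 [simp]: "wint x 0 = 0"
  using wint_smult[of x 0 0] by simp

text \<open>Integration by parts: the boundary terms come from the jumps of the weight at the \<open>t\<^sub>k\<close>.\<close>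

lemma wint_pderiv:
  "wint x (pderiv q) = 2 * wint x (pCons 0 q) - (\<Sum>k=1..m. weight_jump k x * poly q (tk k x))"
proof -
  let ?N = "degree q"
  have "wint x (pderiv q) = (\<Sum>i\<le>?N. real (Suc i) * coeff q (Suc i) * mu x i)"
    using wint_eq_moments[of "pderiv q" ?N] by (simp add: degree_pderiv coeff_pderiv)
  also have "\<dots> = (\<Sum>j\<le>Suc ?N. coeff q j * (real j * mu x (j - 1)))"
    by (subst sum.atMost_Suc_shift) (simp add: algebra_simps)
  also have "\<dots> = (\<Sum>j\<le>?N. coeff q j * (real j * mu x (j - 1)))"
    by (simp add: coeff_eq_0)
  also have "\<dots> = (\<Sum>j\<le>?N. coeff q j *
      (2 * mu x (Suc j) - (\<Sum>k=1..m. \<omega> k * exp (- (c k + x)\<^sup>2) * (c k + x) ^ j)))"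
    by (simp only: moment_recurrence)
  also have "\<dots> = 2 * (\<Sum>j\<le>?N. coeff q j * mu x (Suc j))
      - (\<Sum>k=1..m. weight_jump k x * (\<Sum>j\<le>?N. coeff q j * (c k + x) ^ j))"
    by (simp add: algebra_simps sum_subtractf sum_distrib_left weight_jump_def tk_def) (rule sum.swap)
  also have "(\<Sum>j\<le>?N. coeff q j * mu x (Suc j)) = wint x (pCons 0 q)"
  proof -
    have "wint x (pCons 0 q) = (\<Sum>i\<le>Suc ?N. coeff (pCons 0 q) i * mu x i)"
      by (rule wint_eq_moments) (simp add: degree_pCons_le)
    also have "\<dots> = (\<Sum>j\<le>?N. coeff q j * mu x (Suc j))"
      by (subst sum.atMost_Suc_shift) simp
    finally show ?thesis by simp
  qed
  finally show ?thesis by (simp add: poly_altdef tk_def)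
qed

end

locale admissible_step_weight = step_weight +
  assumes c_mono: "\<And>i j. 1 \<le> i \<Longrightarrow> i \<le> j \<Longrightarrow> j \<le> m \<Longrightarrow> c i \<le> c j"
    and partial_sums_nonneg: "\<And>l. l \<le> m \<Longrightarrow> (\<Sum>k=0..l. \<omega> k) \<ge> 0"
    and weight_nonzero: "\<And>x. \<exists>s. weight m c \<omega> x s \<noteq> 0"
begin

text \<open>The jumps passed by \<open>s\<close> form an initial segment \<open>{1..l}\<close>, so the weight is
  \<open>e\<^sup>-\<^sup>s\<^sup>2\<close> times a partial sum of the \<open>\<omega>\<^sub>k\<close>.\<close>

lemma weight_nonneg: "weight m c \<omega> x s \<ge> 0"
proof -
  define A where "A = {k\<in>{1..m}. c k + x < s}"
  define l where "l = (if A = {} then 0 else Max A)"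
  have fin: "finite A" unfolding A_def by simp
  have "l \<le> m" unfolding l_def A_def using fin A_def by (auto simp: Max_le_iff)
  have "A = {1..l}"
  proof (cases "A = {}")
    case True then show ?thesis by (simp add: l_def)
  next
    case False
    then have "l \<in> A" unfolding l_def using fin Max_in by auto
    show ?thesis
    proof
      show "A \<subseteq> {1..l}" using fin False unfolding l_def by (auto simp: A_def)
      show "{1..l} \<subseteq> A"
        using \<open>l \<in> A\<close> c_mono by (force simp: A_def)
    qed
  qed
  have "(\<Sum>k=1..m. \<omega> k * theta (s - (c k + x))) = (\<Sum>k=1..m. if c k + x < s then \<omega> k else 0)"
    by (rule sum.cong) (auto simp: theta_def)
  also have "\<dots> = (\<Sum>k\<in>A. \<omega> k)"
    unfolding A_def by (rule sum.inter_filter[symmetric]) simp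
  also have "\<dots> = (\<Sum>k=1..l. \<omega> k)" unfolding \<open>A = {1..l}\<close> ..
  finally have "\<omega> 0 + (\<Sum>k=1..m. \<omega> k * theta (s - (c k + x))) = (\<Sum>k=0..l. \<omega> k)"
    by (simp add: sum.atLeast_Suc_atMost)
  then show ?thesis
    unfolding weight_def using partial_sums_nonneg[OF \<open>l \<le> m\<close>] by simp
qed

lemma weight_pos_on_interval: "\<exists>a b. a < b \<and> (\<forall>s\<in>{a<..<b}. weight m c \<omega> x s > 0)"
proof -
  define S where "S s = \<omega> 0 + (\<Sum>k=1..m. \<omega> k * theta (s - (c k + x)))" for s
  have weight_S: "weight m c \<omega> x s = exp (- s\<^sup>2) * S s" for s
    unfolding weight_def S_def ..
  obtain s0 where "weight m c \<omega> x s0 \<noteq> 0" using weight_nonzero by blast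
  then have "S s0 > 0"
    using weight_nonneg[of x s0] unfolding weight_S by (simp add: zero_le_mult_iff)
  define D where "D = (\<lambda>k. s0 - (c k + x)) ` {k\<in>{1..m}. c k + x < s0}"
  define \<delta> where "\<delta> = Min (insert 1 D)"
  have fin: "finite D" unfolding D_def by simp
  have "\<delta> > 0" unfolding \<delta>_def using fin by (auto simp: D_def)
  have \<delta>_le: "\<delta> \<le> s0 - (c k + x)" if "k \<in> {1..m}" "c k + x < s0" for k
    unfolding \<delta>_def using fin that by (intro Min_le) (auto simp: D_def)
  have "S s = S s0" if s: "s \<in> {s0 - \<delta><..<s0}" for s
  proof -
    have "theta (s - (c k + x)) = theta (s0 - (c k + x))" if "k \<in> {1..m}" for k
      using s \<delta>_le[OF that] by (cases "c k + x < s0") (auto simp: theta_def)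
    then show ?thesis unfolding S_def by (auto intro!: sum.cong)
  qed
  then have "weight m c \<omega> x s > 0" if "s \<in> {s0 - \<delta><..<s0}" for s
    using that \<open>S s0 > 0\<close> unfolding weight_S by simp
  then show ?thesis using \<open>\<delta> > 0\<close> by (intro exI[of _ "s0 - \<delta>"] exI[of _ s0]) auto
qed

lemma wint_square_pos:
  assumes "q \<noteq> 0"
  shows "wint x (q * q) > 0"
proof (rule ccontr)
  assume "\<not> wint x (q * q) > 0"
  moreover have "wint x (q * q) \<ge> 0"
    unfolding wint_def by (intro Bochner_Integration.integral_nonneg) (simp add: weight_nonneg)
  ultimately have "wint x (q * q) = 0" by simp
  then have vanish: "AE s in lborel. poly (q * q) s * weight m c \<omega> x s = 0"
    unfolding wint_def using integrable_poly_weight[of "q * q" x]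
    by (subst (asm) integral_nonneg_eq_0_iff_AE) (auto simp: weight_nonneg)
  have no_root: "AE s in lborel. s \<notin> {s. poly q s = 0}"
    by (rule AE_not_in[OF finite_imp_null_set_lborel[OF poly_roots_finite[OF assms]]])
  obtain a b where ab: "a < b" "\<forall>s\<in>{a<..<b}. weight m c \<omega> x s > 0"
    using weight_pos_on_interval by blast
  have "AE s in lborel. s \<notin> {a<..<b}"
    using vanish no_root by eventually_elim (use ab in force)
  then have "emeasure lborel {a<..<b} = 0"
    by (subst (asm) AE_iff_measurable[of "{a<..<b}"]) auto
  then show False using ab by simp
qed

end

section \<open>Monic orthogonal polynomials and the Hankel determinant\<close>

definition deg_lt :: "'a::zero poly \<Rightarrow> nat \<Rightarrow> bool" where
  "deg_lt q n \<longleftrightarrow> (\<forall>i\<ge>n. coeff q i = 0)"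

lemma deg_lt_add: "deg_lt p n \<Longrightarrow> deg_lt q n \<Longrightarrow> deg_lt (p + q) n"
  by (simp add: deg_lt_def)

lemma deg_lt_diff: "deg_lt p n \<Longrightarrow> deg_lt q n \<Longrightarrow> deg_lt (p - q) n"
  by (simp add: deg_lt_def)

lemma deg_lt_smult: "deg_lt p n \<Longrightarrow> deg_lt (Polynomial.smult a p) n"
  by (simp add: deg_lt_def)

lemma deg_lt_mono: "deg_lt p n \<Longrightarrow> n \<le> n' \<Longrightarrow> deg_lt p n'"
  by (simp add: deg_lt_def)

lemma deg_lt_pCons: "deg_lt p n \<Longrightarrow> deg_lt (pCons 0 p) (Suc n)"
  by (auto simp: deg_lt_def coeff_pCons split: nat.split)

lemma deg_lt_pderiv: "deg_lt q n \<Longrightarrow> deg_lt (pderiv q) n"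
  by (simp add: deg_lt_def coeff_pderiv)

lemma deg_lt_0_iff: "deg_lt p 0 \<longleftrightarrow> p = 0"
  by (simp add: deg_lt_def poly_eq_iff)

lemma deg_lt_iff: "deg_lt p n \<longleftrightarrow> p = 0 \<or> degree p < n"
proof
  assume "deg_lt p n"
  show "p = 0 \<or> degree p < n"
  proof (rule disjCI)
    assume "\<not> degree p < n"
    then have "coeff p (degree p) = 0" using \<open>deg_lt p n\<close> by (simp add: deg_lt_def)
    then show "p = 0" by simp
  qed
next
  assume "p = 0 \<or> degree p < n"
  then show "deg_lt p n" by (auto simp: deg_lt_def coeff_eq_0)
qed

lemma hankel_det_eq_det: "hankel_det n a = det (mat n n (\<lambda>(i, j). a (i + j)))"
  unfolding hankel_det_def det_def'[OF mat_carrier] by (simp add: atLeast0LessThan)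

context admissible_step_weight
begin

text \<open>The three-term recurrence \<open>P\<^sub>n\<^sub>+\<^sub>1 = (z - \<alpha>\<^sub>n) P\<^sub>n - \<beta>\<^sub>n P\<^sub>n\<^sub>-\<^sub>1\<close>, with the coefficients
  \<open>alpha\<close> and \<open>beta\<close> (defined below) written out, since they refer to \<open>opoly\<close> itself.\<close>

fun opoly :: "nat \<Rightarrow> real \<Rightarrow> real poly" where
  "opoly 0 x = 1"
| "opoly (Suc 0) x = pCons 0 1 - Polynomial.smult (wint x (pCons 0 1 * 1) / wint x (1 * 1)) 1"
| "opoly (Suc (Suc n)) x = pCons 0 (opoly (Suc n) x)
     - Polynomial.smult (wint x (pCons 0 (opoly (Suc n) x) * opoly (Suc n) x)
         / wint x (opoly (Suc n) x * opoly (Suc n) x)) (opoly (Suc n) x)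
     - Polynomial.smult (wint x (opoly (Suc n) x * opoly (Suc n) x) / wint x (opoly n x * opoly n x))
         (opoly n x)"

definition hn :: "nat \<Rightarrow> real \<Rightarrow> real" where
  "hn n x = wint x (opoly n x * opoly n x)"

definition alpha :: "nat \<Rightarrow> real \<Rightarrow> real" where
  "alpha n x = wint x (pCons 0 (opoly n x) * opoly n x) / hn n x"

definition beta :: "nat \<Rightarrow> real \<Rightarrow> real" where
  "beta n x = (if n = 0 then 0 else hn n x / hn (n - 1) x)"

definition opoly_prev :: "nat \<Rightarrow> real \<Rightarrow> real poly" where
  "opoly_prev n x = (if n = 0 then 0 else opoly (n - 1) x)"

lemma opoly_Suc:
  "opoly (Suc n) x = pCons 0 (opoly n x) - Polynomial.smult (alpha n x) (opoly n x)
     - Polynomial.smult (beta n x) (opoly_prev n x)"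
  by (cases n) (simp_all add: alpha_def beta_def hn_def opoly_prev_def)

lemma coeff_opoly: "coeff (opoly n x) n = 1 \<and> (\<forall>i>n. coeff (opoly n x) i = 0)"
proof (induction n rule: less_induct)
  case (less n)
  show ?case
  proof (cases n)
    case 0 then show ?thesis by simp
  next
    case (Suc k)
    have "\<forall>i\<ge>k. coeff (opoly_prev k x) i = 0"
      using less Suc by (cases k) (auto simp: opoly_prev_def)
    then show ?thesis
      unfolding Suc opoly_Suc using less Suc by (auto simp: coeff_pCons split: nat.split)
  qed
qed

lemma coeff_opoly_self [simp]: "coeff (opoly n x) n = 1"
  using coeff_opoly by blast

lemma coeff_opoly_above: "n < i \<Longrightarrow> coeff (opoly n x) i = 0"
  using coeff_opoly by blast

lemma degree_opoly [simp]: "degree (opoly n x) = n"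
  by (rule antisym[OF degree_le le_degree]) (simp_all add: coeff_opoly_above)

lemma opoly_nonzero: "opoly n x \<noteq> 0"
proof
  assume "opoly n x = 0"
  then have "coeff (opoly n x) n = 0" by simp
  then show False by simp
qed

lemma hn_pos: "hn n x > 0"
  unfolding hn_def by (rule wint_square_pos[OF opoly_nonzero])

lemma beta_mult_hn: "n \<ge> 1 \<Longrightarrow> beta n x * hn (n - 1) x = hn n x"
  using hn_pos[of "n - 1" x] by (simp add: beta_def)

lemma beta_pos: "n \<ge> 1 \<Longrightarrow> beta n x > 0"
  using hn_pos[of n x] hn_pos[of "n - 1" x] by (simp add: beta_def)

lemma alpha_mult_hn: "wint x (pCons 0 (opoly n x * opoly n x)) = alpha n x * hn n x"
  using hn_pos[of n x] by (simp add: alpha_def)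

lemma deg_lt_opoly: "j < n \<Longrightarrow> deg_lt (opoly j x) n"
  by (simp add: deg_lt_def coeff_opoly_above)

lemma deg_lt_opoly_prev: "j \<le> n \<Longrightarrow> deg_lt (opoly_prev j x) n"
  by (auto simp: deg_lt_def opoly_prev_def coeff_opoly_above)

lemma deg_lt_sub_leading:
  assumes "deg_lt q (Suc k)"
  shows "deg_lt (q - Polynomial.smult (coeff q k) (opoly k x)) k"
  unfolding deg_lt_def
proof (intro allI impI)
  fix i assume "k \<le> i"
  then consider "i = k" | "Suc k \<le> i" by linarith
  then show "coeff (q - Polynomial.smult (coeff q k) (opoly k x)) i = 0"
    by cases (use assms in \<open>simp_all add: deg_lt_def coeff_opoly_above\<close>)
qed

lemma wint_commute: "wint x (p * q) = wint x (q * p)"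
  by (simp add: mult.commute)

lemma wint_opoly_mult_leading:
  assumes orth: "\<And>r. deg_lt r n \<Longrightarrow> wint x (opoly n x * r) = 0"
    and q: "deg_lt q (Suc n)"
  shows "wint x (opoly n x * q) = coeff q n * hn n x"
proof -
  let ?r = "q - Polynomial.smult (coeff q n) (opoly n x)"
  have "opoly n x * q = Polynomial.smult (coeff q n) (opoly n x * opoly n x) + opoly n x * ?r"
    by (simp add: algebra_simps)
  then show ?thesis
    using orth[OF deg_lt_sub_leading[OF q]] by (simp add: wint_add wint_smult hn_def)
qed

lemma wint_opoly_Suc_orthogonal:
  assumes orth: "\<And>j r. j \<le> k \<Longrightarrow> deg_lt r j \<Longrightarrow> wint x (opoly j x * r) = 0"
    and q_deg: "deg_lt q (Suc k)"
  shows "wint x (opoly (Suc k) x * q) = 0"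
proof -
  let ?P = "opoly k x"
  define d where "d = coeff q k"
  define r where "r = q - Polynomial.smult d ?P"
  have r: "deg_lt r k" unfolding r_def d_def by (rule deg_lt_sub_leading[OF q_deg])
  have q: "q = Polynomial.smult d ?P + r" unfolding r_def by simp
  have orth_k: "\<And>r. deg_lt r k \<Longrightarrow> wint x (?P * r) = 0" using orth by blast
  have shift: "wint x (?P * pCons 0 q) = d * alpha k x * hn k x + coeff r (k - 1) * hn k x"
  proof -
    have "?P * pCons 0 q = Polynomial.smult d (pCons 0 ?P * ?P) + ?P * pCons 0 r"
      unfolding q by (simp add: ring_distribs)
    then have "wint x (?P * pCons 0 q) = d * wint x (pCons 0 ?P * ?P) + wint x (?P * pCons 0 r)"
      by (simp only: wint_add wint_smult)
    moreover have "wint x (?P * pCons 0 r) = coeff (pCons 0 r) k * hn k x"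
      by (rule wint_opoly_mult_leading[OF orth_k deg_lt_pCons[OF r]])
    moreover have "coeff (pCons 0 r) k = coeff r (k - 1)"
      using r by (cases k) (auto simp: deg_lt_0_iff)
    ultimately show ?thesis by (simp add: alpha_mult_hn)
  qed
  have same: "wint x (?P * q) = d * hn k x"
    unfolding d_def by (rule wint_opoly_mult_leading[OF orth_k q_deg])
  have prev: "beta k x * wint x (opoly_prev k x * q) = coeff r (k - 1) * hn k x"
  proof (cases k)
    case 0 then show ?thesis using r by (simp add: opoly_prev_def deg_lt_0_iff)
  next
    case (Suc j)
    have "wint x (opoly j x * ?P) = 0"
      using orth_k[OF deg_lt_opoly[of j k]] Suc by (simp add: wint_commute)
    moreover have "wint x (opoly j x * r) = coeff r j * hn j x"
      by (rule wint_opoly_mult_leading) (use orth Suc r in simp_all)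
    ultimately show ?thesis
      using Suc beta_mult_hn[of k x] unfolding q
      by (simp add: opoly_prev_def algebra_simps wint_add wint_smult)
  qed
  have "wint x (opoly (Suc k) x * q) = wint x (?P * pCons 0 q) - alpha k x * wint x (?P * q)
      - beta k x * wint x (opoly_prev k x * q)"
    unfolding opoly_Suc by (simp add: ring_distribs wint_diff wint_smult mult.commute)
  then show ?thesis using shift same prev by (simp add: algebra_simps)
qed

lemma wint_opoly_orthogonal: "deg_lt q n \<Longrightarrow> wint x (opoly n x * q) = 0"
proof (induction n arbitrary: q rule: less_induct)
  case (less n)
  show ?case
  proof (cases n)
    case 0
    then show ?thesis using less.prems by (simp add: deg_lt_0_iff)
  next
    case (Suc k)
    have "wint x (opoly (Suc k) x * q) = 0"
      using less.IH less.prems Suc by (intro wint_opoly_Suc_orthogonal) auto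
    then show ?thesis using Suc by simp
  qed
qed

lemma wint_opoly_opoly_less: "j < n \<Longrightarrow> wint x (opoly n x * opoly j x) = 0"
  by (rule wint_opoly_orthogonal[OF deg_lt_opoly])

lemma orth_poly_eq_opoly: "orth_poly m c \<omega> x n = opoly n x"
  unfolding orth_poly_def
proof (rule the_equality)
  show "lead_coeff (opoly n x) = 1 \<and> degree (opoly n x) = n \<and>
      (\<forall>q. degree q < n \<longrightarrow> (LINT s|lborel. poly (opoly n x) s * poly q s * weight m c \<omega> x s) = 0)"
    using wint_opoly_orthogonal by (auto simp: wint_def deg_lt_iff)
next
  fix p assume p: "lead_coeff p = 1 \<and> degree p = n \<and>
      (\<forall>q. degree q < n \<longrightarrow> (LINT s|lborel. poly p s * poly q s * weight m c \<omega> x s) = 0)"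
  define d where "d = p - opoly n x"
  have "deg_lt d n" unfolding deg_lt_def d_def
  proof (intro allI impI)
    fix i assume "n \<le> i"
    then consider "i = n" | "i > n" by linarith
    then show "coeff (p - opoly n x) i = 0"
      by cases (use p in \<open>auto simp: coeff_opoly_above coeff_eq_0\<close>)
  qed
  show "p = opoly n x"
  proof (rule ccontr)
    assume "p \<noteq> opoly n x"
    then have "d \<noteq> 0" "degree d < n" using \<open>deg_lt d n\<close> by (auto simp: d_def deg_lt_iff)
    have "wint x (d * d) = wint x (p * d) - wint x (opoly n x * d)"
      by (simp add: d_def left_diff_distrib wint_diff)
    also have "\<dots> = 0"
      using p \<open>degree d < n\<close> wint_opoly_orthogonal[OF \<open>deg_lt d n\<close>] by (simp add: wint_def)
    finally show False using wint_square_pos[OF \<open>d \<noteq> 0\<close>, of x] by simp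
  qed
qed

lemma hnorm_eq_hn: "hnorm m c \<omega> x n = hn n x"
  unfolding hnorm_def hn_def wint_def orth_poly_eq_opoly by (simp add: power2_eq_square)

lemma wint_mult_eq_moments:
  assumes "degree p < n" "degree q < n"
  shows "wint x (p * q) = (\<Sum>a<n. \<Sum>b<n. coeff p a * coeff q b * mu x (a + b))"
proof -
  have expand: "poly r s = (\<Sum>a<n. coeff r a * s ^ a)" if "degree r < n" for r :: "real poly" and s
    using poly_eq_sum_le_degree_bound[of r "n - 1" s] that by (simp add: lessThan_Suc_atMost[symmetric])
  have "poly (p * q) s * weight m c \<omega> x s
      = (\<Sum>a<n. \<Sum>b<n. coeff p a * coeff q b * (s ^ (a + b) * weight m c \<omega> x s))" for s
    unfolding poly_mult expand[OF assms(1)] expand[OF assms(2)] sum_product sum_distrib_right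
    by (intro sum.cong refl) (simp add: power_add algebra_simps sum_distrib_left)
  then show ?thesis unfolding wint_def moment_def
    by (simp add: Bochner_Integration.integral_sum integrable_moment_integrand integrable_mult_right)
qed

text \<open>With \<open>A\<close> the unit lower triangular matrix of coefficients of \<open>P\<^sub>0, \<dots>, P\<^sub>n\<^sub>-\<^sub>1\<close> and
  \<open>M\<close> the Hankel matrix of moments, \<open>A M A\<^sup>T\<close> is the Gram matrix \<open>diag(h\<^sub>0, \<dots>, h\<^sub>n\<^sub>-\<^sub>1)\<close>.\<close>

lemma opoly_gram_matrix:
  "mat n n (\<lambda>(i, j). coeff (opoly i x) j) * mat n n (\<lambda>(i, j). mu x (i + j))
     * transpose_mat (mat n n (\<lambda>(i, j). coeff (opoly i x) j))
   = mat n n (\<lambda>(i, j). wint x (opoly i x * opoly j x))"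
  (is "?A * ?M * transpose_mat ?A = ?G")
proof (rule eq_matI)
  fix i j assume "i < dim_row ?G" "j < dim_col ?G"
  then have ij: "i < n" "j < n" by auto
  have "(?A * ?M * transpose_mat ?A) $$ (i, j)
      = (\<Sum>b<n. (\<Sum>a<n. coeff (opoly i x) a * mu x (a + b)) * coeff (opoly j x) b)"
    using ij by (simp add: scalar_prod_def atLeast0LessThan)
  also have "\<dots> = (\<Sum>a<n. \<Sum>b<n. coeff (opoly i x) a * coeff (opoly j x) b * mu x (a + b))"
    by (subst sum.swap) (simp add: sum_distrib_right sum_distrib_left mult_ac)
  also have "\<dots> = ?G $$ (i, j)"
    using ij by (simp add: wint_mult_eq_moments)
  finally show "(?A * ?M * transpose_mat ?A) $$ (i, j) = ?G $$ (i, j)" .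
qed auto

lemma Dn_eq_prod_hn: "Dn m c \<omega> n x = (\<Prod>j<n. hn j x)"
proof -
  let ?A = "mat n n (\<lambda>(i, j). coeff (opoly i x) j)" and ?M = "mat n n (\<lambda>(i, j). mu x (i + j))"
  let ?G = "mat n n (\<lambda>(i, j). wint x (opoly i x * opoly j x))"
  have A: "?A \<in> carrier_mat n n" and M: "?M \<in> carrier_mat n n"
    and At: "transpose_mat ?A \<in> carrier_mat n n" by auto
  have "det ?A = prod_list (diag_mat ?A)"
    by (rule det_lower_triangular[OF _ A]) (simp add: coeff_opoly_above)
  also have "\<dots> = 1" unfolding prod_list_diag_prod using A by simp
  finally have "det ?G = det ?M"
    unfolding opoly_gram_matrix[symmetric]
    using det_mult[OF mult_carrier_mat[OF A M] At] det_mult[OF A M] det_transpose[OF A] by simp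
  moreover have "det ?G = prod_list (diag_mat ?G)"
  proof (rule det_lower_triangular[OF _ mat_carrier])
    fix i j assume "i < j" "j < n"
    then show "?G $$ (i, j) = 0"
      using wint_opoly_opoly_less[of i j x] by (simp add: wint_commute)
  qed
  moreover have "prod_list (diag_mat ?G) = (\<Prod>j<n. hn j x)"
    unfolding prod_list_diag_prod by (simp add: hn_def atLeast0LessThan)
  ultimately show ?thesis
    unfolding Dn_def hankel_det_eq_det by simp
qed

lemma Dn_pos: "Dn m c \<omega> n x > 0"
  unfolding Dn_eq_prod_hn by (rule prod_pos) (simp add: hn_pos)

lemma wint_opoly_mult_deg_lt_Suc:
  "deg_lt q (Suc n) \<Longrightarrow> wint x (opoly n x * q) = coeff q n * hn n x"
  by (rule wint_opoly_mult_leading[OF wint_opoly_orthogonal])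

lemma pCons_0_opoly:
  "pCons 0 (opoly n x) = opoly (Suc n) x + Polynomial.smult (alpha n x) (opoly n x)
     + Polynomial.smult (beta n x) (opoly_prev n x)"
  by (simp add: opoly_Suc)

lemma poly_opoly_recurrence:
  "t * poly (opoly n x) t
     = poly (opoly (Suc n) x) t + alpha n x * poly (opoly n x) t + beta n x * poly (opoly_prev n x) t"
  using arg_cong[OF pCons_0_opoly[of n x], of "\<lambda>p. poly p t"] by simp

lemma wint_opoly_pCons_0_opoly_pred:
  "n \<ge> 1 \<Longrightarrow> wint x (opoly n x * pCons 0 (opoly (n - 1) x)) = hn n x"
  using wint_opoly_mult_deg_lt_Suc[where q = "pCons 0 (opoly (n - 1) x)" and n = n and x = x]
  by (simp add: deg_lt_def coeff_pCons coeff_opoly_above split: nat.split)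

lemma deg_lt_pderiv_opoly: "deg_lt (pderiv (opoly n x)) n"
  by (simp add: deg_lt_def coeff_pderiv coeff_opoly_above)

lemma coeff_pCons_0_pderiv: "coeff (pCons 0 (pderiv p)) i = of_nat i * coeff p i"
  by (cases i) (simp_all add: coeff_pderiv)

definition psub :: "nat \<Rightarrow> real \<Rightarrow> real" where
  "psub n x = (if n = 0 then 0 else coeff (opoly n x) (n - 1))"

lemma psub_Suc: "psub (Suc n) x = psub n x - alpha n x"
  by (cases n) (simp_all add: psub_def opoly_Suc opoly_prev_def coeff_opoly_above)

text \<open>The following three identities are integration by parts applied to \<open>P\<^sub>n\<^sup>2\<close>,
  \<open>P\<^sub>n P\<^sub>n\<^sub>-\<^sub>1\<close> and \<open>z P\<^sub>n P\<^sub>n\<^sub>-\<^sub>1\<close>.\<close>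

lemma sum_jumps_opoly_sq:
  "(\<Sum>k=1..m. weight_jump k x * (poly (opoly n x) (tk k x))\<^sup>2) = 2 * alpha n x * hn n x"
proof -
  let ?P = "opoly n x"
  have "wint x (pderiv (?P * ?P)) = wint x (?P * pderiv ?P) + wint x (?P * pderiv ?P)"
    by (simp only: pderiv_mult wint_add mult.commute[of "pderiv ?P"])
  also have "\<dots> = 0"
    by (simp add: wint_opoly_orthogonal[OF deg_lt_pderiv_opoly])
  finally show ?thesis
    using wint_pderiv[of x "?P * ?P"] alpha_mult_hn[of x n] by (simp add: power2_eq_square)
qed

lemma sum_jumps_opoly_opoly_pred:
  assumes "n \<ge> 1"
  shows "(\<Sum>k=1..m. weight_jump k x * poly (opoly n x) (tk k x) * poly (opoly (n - 1) x) (tk k x))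
     = 2 * hn n x - real n * hn (n - 1) x"
proof -
  let ?P = "opoly n x" and ?Q = "opoly (n - 1) x"
  have "wint x (?P * pderiv ?Q) = 0"
    using assms by (intro wint_opoly_orthogonal deg_lt_mono[OF deg_lt_pderiv_opoly]) simp
  moreover have "wint x (?Q * pderiv ?P) = real n * hn (n - 1) x"
    using wint_opoly_mult_deg_lt_Suc[where q = "pderiv ?P" and n = "n - 1" and x = x] assms
    by (simp add: deg_lt_pderiv_opoly coeff_pderiv)
  ultimately have "wint x (pderiv (?P * ?Q)) = real n * hn (n - 1) x"
    by (simp add: pderiv_mult wint_add mult.commute)
  moreover have "wint x (pCons 0 (?P * ?Q)) = hn n x"
    using wint_opoly_pCons_0_opoly_pred[OF assms, of x] by simp
  ultimately show ?thesis
    using wint_pderiv[of x "?P * ?Q"] by (simp add: mult.assoc)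
qed

lemma wint_pCons_0_pderiv_opoly_mult_pred:
  assumes "n \<ge> 1"
  shows "wint x (pCons 0 (pderiv (opoly n x)) * opoly (n - 1) x) = - psub n x * hn (n - 1) x"
proof -
  let ?P = "opoly n x" and ?Q = "opoly (n - 1) x"
  define r where "r = pCons 0 (pderiv ?P) - Polynomial.smult (real n) ?P"
  have "deg_lt r n"
    unfolding deg_lt_def r_def coeff_diff coeff_smult coeff_pCons_0_pderiv
    by (auto simp: coeff_opoly_above le_eq_less_or_eq)
  then have "wint x (?Q * r) = coeff r (n - 1) * hn (n - 1) x"
    using assms wint_opoly_mult_deg_lt_Suc[where q = r and n = "n - 1" and x = x] by simp
  moreover have "coeff r (n - 1) = - psub n x"
    using assms by (simp add: r_def coeff_pCons_0_pderiv psub_def of_nat_diff algebra_simps)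
  moreover have "wint x (?P * ?Q) = 0"
    using wint_opoly_opoly_less[of "n - 1" n x] assms by simp
  moreover have "pCons 0 (pderiv ?P) * ?Q = Polynomial.smult (real n) (?P * ?Q) + ?Q * r"
    unfolding r_def by (simp add: algebra_simps)
  ultimately show ?thesis
    by (simp only: wint_add wint_smult)
qed

lemma wint_pCons_0_pCons_0_opoly_mult_pred:
  assumes "n \<ge> 1"
  shows "wint x (pCons 0 (pCons 0 (opoly n x * opoly (n - 1) x)))
    = hn n x * (alpha n x + alpha (n - 1) x)"
proof -
  let ?P = "opoly n x" and ?Q = "opoly (n - 1) x" and ?R = "opoly_prev (n - 1) x"
  have "pCons 0 (pCons 0 (?P * ?Q)) = pCons 0 ?P * pCons 0 ?Q" by simp
  also have "\<dots> = pCons 0 ?P * ?P + Polynomial.smult (alpha (n - 1) x) (pCons 0 ?P * ?Q)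
      + Polynomial.smult (beta (n - 1) x) (pCons 0 ?P * ?R)"
    using pCons_0_opoly[of "n - 1" x] assms by (simp add: distrib_left)
  finally have "wint x (pCons 0 (pCons 0 (?P * ?Q))) = wint x (pCons 0 ?P * ?P)
      + alpha (n - 1) x * wint x (pCons 0 ?P * ?Q) + beta (n - 1) x * wint x (pCons 0 ?P * ?R)"
    by (simp only: wint_add wint_smult)
  moreover have "wint x (pCons 0 ?P * ?Q) = hn n x"
    using wint_opoly_pCons_0_opoly_pred[OF assms, of x] by simp
  moreover have "wint x (pCons 0 ?P * ?R) = 0"
    using wint_opoly_orthogonal[OF deg_lt_pCons[OF deg_lt_opoly_prev[of "n - 1" "n - 1" x]], where x = x]
      assms
    by simp
  ultimately show ?thesis using alpha_mult_hn[of x n] by (simp add: algebra_simps)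
qed

lemma sum_jumps_tk_opoly_opoly_pred:
  assumes "n \<ge> 1"
  shows "(\<Sum>k=1..m. weight_jump k x * tk k x * poly (opoly n x) (tk k x)
        * poly (opoly (n - 1) x) (tk k x))
     = psub n x * hn (n - 1) x + 2 * hn n x * (alpha n x + alpha (n - 1) x)"
proof -
  let ?P = "opoly n x" and ?Q = "opoly (n - 1) x"
  have "pderiv (pCons 0 (?P * ?Q)) = ?P * ?Q + pCons 0 (pderiv ?P) * ?Q + ?P * pCons 0 (pderiv ?Q)"
    by (simp add: pderiv_pCons pderiv_mult algebra_simps)
  moreover have "wint x (?P * ?Q) = 0"
    using wint_opoly_opoly_less[of "n - 1" n x] assms by simp
  moreover have "wint x (?P * pCons 0 (pderiv ?Q)) = 0"
    using assms deg_lt_pCons[OF deg_lt_pderiv_opoly[of "n - 1" x]]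
    by (intro wint_opoly_orthogonal) simp
  ultimately have "wint x (pderiv (pCons 0 (?P * ?Q))) = - psub n x * hn (n - 1) x"
    using wint_pCons_0_pderiv_opoly_mult_pred[OF assms, of x] by (simp add: wint_add)
  then show ?thesis
    using wint_pderiv[of x "pCons 0 (?P * ?Q)"]
      wint_pCons_0_pCons_0_opoly_mult_pred[OF assms, of x]
    by (simp add: algebra_simps)
qed

end

section \<open>Dependence on \<open>x\<close>\<close>

text \<open>\<open>SOME\<close> merely picks one of the uniform degree bounds; any bound gives the same polynomial.\<close>

definition coeffwise_differentiable :: "(real \<Rightarrow> real poly) \<Rightarrow> bool" where
  "coeffwise_differentiable F \<longleftrightarrow>
     (\<exists>N. \<forall>y. degree (F y) \<le> N) \<and> (\<forall>i x. (\<lambda>y. coeff (F y) i) differentiable (at x))"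

definition coeffwise_deriv :: "(real \<Rightarrow> real poly) \<Rightarrow> real \<Rightarrow> real poly" where
  "coeffwise_deriv F x =
     (\<Sum>i\<le>(SOME N. \<forall>y. degree (F y) \<le> N). monom (deriv (\<lambda>y. coeff (F y) i) x) i)"

lemma coeff_coeffwise_deriv:
  assumes "coeffwise_differentiable F"
  shows "coeff (coeffwise_deriv F x) i = deriv (\<lambda>y. coeff (F y) i) x"
proof -
  define N where "N = (SOME N. \<forall>y. degree (F y) \<le> N)"
  have "\<exists>N. \<forall>y. degree (F y) \<le> N"
    using assms by (simp add: coeffwise_differentiable_def)
  then have "\<forall>y. degree (F y) \<le> N"
    unfolding N_def by (rule someI_ex)
  show ?thesis
  proof (cases "i \<le> N")
    case True
    then show ?thesis unfolding coeffwise_deriv_def N_def[symmetric] coeff_sum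
      by (simp add: sum.delta)
  next
    case False
    have "(\<lambda>y. coeff (F y) i) = (\<lambda>y. 0)"
    proof
      fix y show "coeff (F y) i = 0"
        using \<open>\<forall>y. degree (F y) \<le> N\<close>[rule_format, of y] False by (intro coeff_eq_0) linarith
    qed
    then show ?thesis
      using False unfolding coeffwise_deriv_def N_def[symmetric] coeff_sum
      by (simp add: DERIV_imp_deriv)
  qed
qed

lemma coeff_has_derivative_coeffwise_deriv:
  "coeffwise_differentiable F \<Longrightarrow>
     ((\<lambda>y. coeff (F y) i) has_real_derivative coeff (coeffwise_deriv F x) i) (at x)"
  by (simp add: coeff_coeffwise_deriv coeffwise_differentiable_def DERIV_deriv_iff_real_differentiable)

lemma degree_coeffwise_deriv_le:
  assumes "coeffwise_differentiable F" "\<forall>y. degree (F y) \<le> N"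
  shows "degree (coeffwise_deriv F x) \<le> N"
proof (rule degree_le, intro allI impI)
  fix i assume "N < i"
  have "(\<lambda>y. coeff (F y) i) = (\<lambda>y. 0)"
  proof
    fix y show "coeff (F y) i = 0"
      using assms(2)[rule_format, of y] \<open>N < i\<close> by (intro coeff_eq_0) linarith
  qed
  then show "coeff (coeffwise_deriv F x) i = 0"
    unfolding coeff_coeffwise_deriv[OF assms(1)] by (simp add: DERIV_imp_deriv)
qed

lemma coeffwise_differentiable_const: "coeffwise_differentiable (\<lambda>y. p)"
  unfolding coeffwise_differentiable_def by auto

lemma coeffwise_deriv_const: "coeffwise_deriv (\<lambda>y. p) x = 0"
  by (rule poly_eqI) (simp add: coeff_coeffwise_deriv[OF coeffwise_differentiable_const] DERIV_imp_deriv)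

lemma coeffwise_differentiable_diff:
  "coeffwise_differentiable F \<Longrightarrow> coeffwise_differentiable G \<Longrightarrow>
     coeffwise_differentiable (\<lambda>y. F y - G y)"
  unfolding coeffwise_differentiable_def
  by (auto intro!: differentiable_diff) (meson degree_diff_le max.cobounded1 max.cobounded2 order_trans)

lemma coeffwise_differentiable_smult:
  "(\<And>x. f differentiable (at x)) \<Longrightarrow> coeffwise_differentiable F \<Longrightarrow>
     coeffwise_differentiable (\<lambda>y. Polynomial.smult (f y) (F y))"
  unfolding coeffwise_differentiable_def by (auto intro!: differentiable_mult)

lemma coeffwise_differentiable_pCons_0:
  assumes "coeffwise_differentiable F"
  shows "coeffwise_differentiable (\<lambda>y. pCons 0 (F y))"
proof -
  obtain N where "\<forall>y. degree (F y) \<le> N"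
    using assms by (auto simp: coeffwise_differentiable_def)
  then have "\<forall>y. degree (pCons 0 (F y)) \<le> Suc N"
    by (simp add: order_trans[OF degree_pCons_le])
  moreover have "(\<lambda>y. coeff (pCons 0 (F y)) i) differentiable at x" for i x
    using assms by (cases i) (simp_all add: coeffwise_differentiable_def)
  ultimately show ?thesis
    unfolding coeffwise_differentiable_def by blast
qed

lemma coeffwise_differentiable_mult:
  assumes "coeffwise_differentiable F" "coeffwise_differentiable G"
  shows "coeffwise_differentiable (\<lambda>y. F y * G y)"
proof -
  obtain N M where "\<forall>y. degree (F y) \<le> N" "\<forall>y. degree (G y) \<le> M"
    using assms by (auto simp: coeffwise_differentiable_def)
  then have "\<forall>y. degree (F y * G y) \<le> N + M"
    by (meson add_mono degree_mult_le order_trans)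
  moreover have "(\<lambda>y. coeff (F y * G y) i) differentiable at x" for i x
    using assms unfolding coeff_mult coeffwise_differentiable_def
    by (intro differentiable_sum differentiable_mult) auto
  ultimately show ?thesis
    unfolding coeffwise_differentiable_def by blast
qed

lemma coeffwise_deriv_mult:
  assumes F: "coeffwise_differentiable F" and G: "coeffwise_differentiable G"
  shows "coeffwise_deriv (\<lambda>y. F y * G y) x = coeffwise_deriv F x * G x + F x * coeffwise_deriv G x"
proof (rule poly_eqI)
  fix n
  have "((\<lambda>y. coeff (F y * G y) n) has_real_derivative
     (\<Sum>i\<le>n. coeff (coeffwise_deriv F x) i * coeff (G x) (n - i)
        + coeff (coeffwise_deriv G x) (n - i) * coeff (F x) i)) (at x)"
    unfolding coeff_mult
    by (intro DERIV_sum DERIV_mult coeff_has_derivative_coeffwise_deriv F G)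
  then have "coeff (coeffwise_deriv (\<lambda>y. F y * G y) x) n =
     (\<Sum>i\<le>n. coeff (coeffwise_deriv F x) i * coeff (G x) (n - i)
        + coeff (coeffwise_deriv G x) (n - i) * coeff (F x) i)"
    unfolding coeff_coeffwise_deriv[OF coeffwise_differentiable_mult[OF F G]] by (rule DERIV_imp_deriv)
  then show "coeff (coeffwise_deriv (\<lambda>y. F y * G y) x) n
      = coeff (coeffwise_deriv F x * G x + F x * coeffwise_deriv G x) n"
    by (simp add: coeff_mult sum.distrib mult.commute[of "coeff (F x) _"])
qed

lemma coeffwise_deriv_mult_const:
  "coeffwise_differentiable F \<Longrightarrow> coeffwise_deriv (\<lambda>y. F y * q) x = coeffwise_deriv F x * q"
  using coeffwise_deriv_mult[OF _ coeffwise_differentiable_const] by (simp add: coeffwise_deriv_const)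

lemma poly_pderiv_eq_sum_le_degree_bound:
  fixes p :: "real poly"
  assumes "degree p \<le> N"
  shows "poly (pderiv p) t = (\<Sum>i\<le>N. coeff p i * (real i * t ^ (i - 1)))"
proof -
  have "((\<lambda>z. \<Sum>i\<le>N. coeff p i * z ^ i) has_real_derivative
      (\<Sum>i\<le>N. coeff p i * (real i * t ^ (i - 1)))) (at t)"
    by (intro DERIV_sum DERIV_cmult) (simp add: DERIV_pow)
  moreover have "(\<lambda>z. \<Sum>i\<le>N. coeff p i * z ^ i) = poly p"
    using poly_eq_sum_le_degree_bound[OF assms] by auto
  ultimately show ?thesis using poly_DERIV[of p t] DERIV_unique by metis
qed

context admissible_step_weight
begin

text \<open>Besides the derivative of \<open>F\<close>, the moments contribute the jump terms, since moving \<open>x\<close>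
  only moves the jumps of the weight.\<close>

lemma wint_has_derivative:
  assumes F: "coeffwise_differentiable F"
  shows "((\<lambda>y. wint y (F y)) has_real_derivative
     wint x (coeffwise_deriv F x) - (\<Sum>k=1..m. weight_jump k x * poly (F x) (tk k x))) (at x)"
proof -
  obtain N where N: "\<forall>y. degree (F y) \<le> N"
    using F unfolding coeffwise_differentiable_def by blast
  let ?J = "\<lambda>i. \<Sum>k=1..m. \<omega> k * exp (- (c k + x)\<^sup>2) * (c k + x) ^ i"
  have "((\<lambda>y. \<Sum>i\<le>N. coeff (F y) i * mu y i) has_real_derivative
      (\<Sum>i\<le>N. coeff (coeffwise_deriv F x) i * mu x i + - ?J i * coeff (F x) i)) (at x)"
    by (intro DERIV_sum DERIV_mult coeff_has_derivative_coeffwise_deriv F moment_has_derivative)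
  moreover have "(\<lambda>y. wint y (F y)) = (\<lambda>y. \<Sum>i\<le>N. coeff (F y) i * mu y i)"
    using wint_eq_moments N by auto
  moreover have "wint x (coeffwise_deriv F x) = (\<Sum>i\<le>N. coeff (coeffwise_deriv F x) i * mu x i)"
    by (rule wint_eq_moments[OF degree_coeffwise_deriv_le[OF F N]])
  moreover have "(\<Sum>k=1..m. weight_jump k x * poly (F x) (tk k x)) = (\<Sum>i\<le>N. coeff (F x) i * ?J i)"
    unfolding poly_eq_sum_le_degree_bound[OF N[rule_format]] weight_jump_def tk_def
    by (simp add: sum_distrib_left sum_distrib_right algebra_simps) (rule sum.swap)
  ultimately show ?thesis by (simp add: sum.distrib sum_negf sum_subtractf mult.commute)
qed

lemma poly_at_tk_has_derivative:
  assumes F: "coeffwise_differentiable F"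
  shows "((\<lambda>y. poly (F y) (tk k y)) has_real_derivative
     poly (coeffwise_deriv F x) (tk k x) + poly (pderiv (F x)) (tk k x)) (at x)"
proof -
  obtain N where N: "\<forall>y. degree (F y) \<le> N"
    using F unfolding coeffwise_differentiable_def by blast
  have "((\<lambda>y. (c k + y) ^ i) has_real_derivative real i * (c k + x) ^ (i - 1)) (at x)" for i
    by (auto intro!: derivative_eq_intros)
  then have "((\<lambda>y. \<Sum>i\<le>N. coeff (F y) i * (c k + y) ^ i) has_real_derivative
      (\<Sum>i\<le>N. coeff (coeffwise_deriv F x) i * (c k + x) ^ i
         + real i * (c k + x) ^ (i - 1) * coeff (F x) i)) (at x)"
    by (intro DERIV_sum DERIV_mult coeff_has_derivative_coeffwise_deriv F)
  moreover have "(\<lambda>y. poly (F y) (tk k y)) = (\<lambda>y. \<Sum>i\<le>N. coeff (F y) i * (c k + y) ^ i)"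
    by (intro ext) (simp add: tk_def poly_eq_sum_le_degree_bound N)
  moreover have "(\<Sum>i\<le>N. coeff (coeffwise_deriv F x) i * (c k + x) ^ i
         + real i * (c k + x) ^ (i - 1) * coeff (F x) i)
      = poly (coeffwise_deriv F x) (tk k x) + poly (pderiv (F x)) (tk k x)"
    unfolding tk_def sum.distrib poly_eq_sum_le_degree_bound[OF degree_coeffwise_deriv_le[OF F N]]
      poly_pderiv_eq_sum_le_degree_bound[OF N[rule_format]]
    by (simp add: mult.commute)
  ultimately show ?thesis by simp
qed

lemma hn_differentiable:
  assumes "coeffwise_differentiable (opoly n)"
  shows "hn n differentiable (at x)"
proof -
  have "hn n = (\<lambda>y. wint y (opoly n y * opoly n y))" by (auto simp: hn_def)
  then show ?thesis
    using wint_has_derivative[OF coeffwise_differentiable_mult[OF assms assms]]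
    by (auto simp: real_differentiable_def)
qed

lemma alpha_differentiable:
  assumes "coeffwise_differentiable (opoly k)"
  shows "alpha k differentiable (at y)"
proof -
  have "(\<lambda>y. wint y (pCons 0 (opoly k y) * opoly k y)) differentiable (at y)"
    using wint_has_derivative[OF coeffwise_differentiable_mult
        [OF coeffwise_differentiable_pCons_0[OF assms] assms]]
    by (auto simp: real_differentiable_def)
  then show ?thesis
    unfolding alpha_def[abs_def] using hn_differentiable[OF assms] hn_pos[of k y]
    by (intro differentiable_divide) auto
qed

lemma beta_differentiable:
  assumes "\<And>j. j \<le> k \<Longrightarrow> coeffwise_differentiable (opoly j)"
  shows "beta k differentiable (at y)"
proof (cases k)
  case 0
  then have "beta k = (\<lambda>y. 0)" by (auto simp: beta_def)
  then show ?thesis by simp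
next
  case (Suc j)
  then have "beta k = (\<lambda>y. hn k y / hn j y)" by (auto simp: beta_def)
  then show ?thesis
    using hn_differentiable[OF assms] hn_pos[of j y] Suc by (auto intro!: differentiable_divide)
qed

lemma coeffwise_differentiable_opoly: "coeffwise_differentiable (opoly n)"
proof (induction n rule: less_induct)
  case (less n)
  show ?case
  proof (cases n)
    case 0
    then have "opoly n = (\<lambda>y. 1)" by auto
    then show ?thesis by (simp add: coeffwise_differentiable_const)
  next
    case (Suc k)
    have IH: "coeffwise_differentiable (opoly j)" if "j \<le> k" for j
      using less Suc that by simp
    have "opoly n = (\<lambda>y. pCons 0 (opoly k y) - Polynomial.smult (alpha k y) (opoly k y)
        - Polynomial.smult (beta k y) (opoly_prev k y))"
      using Suc by (auto simp: opoly_Suc)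
    moreover have "coeffwise_differentiable (opoly_prev k)"
      using IH by (cases k) (auto simp: opoly_prev_def[abs_def] coeffwise_differentiable_const)
    ultimately show ?thesis
      using alpha_differentiable[OF IH[OF order.refl]] beta_differentiable[OF IH]
      by (simp only:) (intro coeffwise_differentiable_diff coeffwise_differentiable_pCons_0
          coeffwise_differentiable_smult IH order.refl)
  qed
qed

lemma deg_lt_coeffwise_deriv_opoly: "deg_lt (coeffwise_deriv (opoly n) x) n"
  unfolding deg_lt_def
proof (intro allI impI)
  fix i assume "n \<le> i"
  then have "(\<lambda>y. coeff (opoly n y) i) = (\<lambda>y. if i = n then 1 else 0)"
    by (intro ext) (simp add: coeff_opoly_above)
  then show "coeff (coeffwise_deriv (opoly n) x) i = 0"
    unfolding coeff_coeffwise_deriv[OF coeffwise_differentiable_opoly] by (simp add: DERIV_imp_deriv)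
qed

text \<open>Differentiate the orthogonality relation \<open>wint x (opoly n x * q) = 0\<close> in \<open>x\<close>.\<close>

lemma wint_coeffwise_deriv_opoly_mult:
  assumes "deg_lt q n"
  shows "wint x (coeffwise_deriv (opoly n) x * q)
    = (\<Sum>k=1..m. weight_jump k x * poly (opoly n x) (tk k x) * poly q (tk k x))"
proof -
  have F: "coeffwise_differentiable (\<lambda>y. opoly n y * q)"
    by (intro coeffwise_differentiable_mult coeffwise_differentiable_opoly
        coeffwise_differentiable_const)
  have "((\<lambda>y. wint y (opoly n y * q)) has_real_derivative
      wint x (coeffwise_deriv (\<lambda>y. opoly n y * q) x)
        - (\<Sum>k=1..m. weight_jump k x * poly (opoly n x * q) (tk k x))) (at x)"
    by (rule wint_has_derivative[OF F])
  moreover have "((\<lambda>y. wint y (opoly n y * q)) has_real_derivative 0) (at x)"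
    by (simp add: wint_opoly_orthogonal[OF assms])
  ultimately have "wint x (coeffwise_deriv (\<lambda>y. opoly n y * q) x)
      - (\<Sum>k=1..m. weight_jump k x * poly (opoly n x * q) (tk k x)) = 0"
    by (rule DERIV_unique)
  then show ?thesis
    unfolding coeffwise_deriv_mult_const[OF coeffwise_differentiable_opoly] by (simp add: mult.assoc)
qed

lemma wint_pderiv_opoly_mult:
  assumes "deg_lt q n" "n \<ge> 1"
  shows "wint x (pderiv (opoly n x) * q)
    = 2 * coeff q (n - 1) * hn n x
      - (\<Sum>k=1..m. weight_jump k x * poly (opoly n x) (tk k x) * poly q (tk k x))"
proof -
  let ?P = "opoly n x"
  have "wint x (pderiv (?P * q)) = wint x (?P * pderiv q) + wint x (pderiv ?P * q)"
    by (simp only: pderiv_mult mult.commute[of q] wint_add)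
  moreover have "wint x (?P * pderiv q) = 0"
    by (rule wint_opoly_orthogonal[OF deg_lt_pderiv[OF assms(1)]])
  moreover have "wint x (pCons 0 (?P * q)) = coeff q (n - 1) * hn n x"
    using wint_opoly_mult_deg_lt_Suc[OF deg_lt_pCons[OF assms(1)], where x = x] assms(2)
    by (cases n) simp_all
  ultimately show ?thesis
    using wint_pderiv[of x "?P * q"] by (simp add: mult.assoc)
qed

text \<open>The ladder relation \<open>\<partial>\<^sub>x P\<^sub>n + P\<^sub>n' = 2 \<beta>\<^sub>n P\<^sub>n\<^sub>-\<^sub>1\<close>: the left side has degree \<open>< n\<close>
  and, by the two lemmas above, the same inner products with lower degrees as the right side.\<close>

lemma coeffwise_deriv_opoly_add_pderiv:
  assumes "n \<ge> 1"
  shows "coeffwise_deriv (opoly n) x + pderiv (opoly n x)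
    = Polynomial.smult (2 * beta n x) (opoly (n - 1) x)"
proof -
  let ?Q = "opoly (n - 1) x"
  define G where
    "G = coeffwise_deriv (opoly n) x + pderiv (opoly n x) - Polynomial.smult (2 * beta n x) ?Q"
  have "deg_lt G n"
    unfolding G_def using assms
    by (intro deg_lt_diff deg_lt_add deg_lt_smult deg_lt_coeffwise_deriv_opoly deg_lt_pderiv_opoly
        deg_lt_opoly) simp
  have "wint x (G * q) = 0" if "deg_lt q n" for q
  proof -
    have "wint x (?Q * q) = coeff q (n - 1) * hn (n - 1) x"
      using wint_opoly_mult_deg_lt_Suc[where q = q and n = "n - 1" and x = x] that assms by simp
    moreover have "wint x (G * q) = wint x (coeffwise_deriv (opoly n) x * q)
        + wint x (pderiv (opoly n x) * q) - 2 * beta n x * wint x (?Q * q)"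
      unfolding G_def by (simp only: ring_distribs wint_add wint_diff wint_smult mult_smult_left)
    ultimately have "wint x (G * q) = 2 * coeff q (n - 1) * (hn n x - beta n x * hn (n - 1) x)"
      by (simp only: wint_coeffwise_deriv_opoly_mult[OF that] wint_pderiv_opoly_mult[OF that assms])
        (simp add: algebra_simps)
    then show ?thesis using beta_mult_hn[OF assms] by simp
  qed
  then have "wint x (G * G) = 0" using \<open>deg_lt G n\<close> by blast
  then have "G = 0" using wint_square_pos[of G x] by fastforce
  then show ?thesis unfolding G_def by (simp add: algebra_simps)
qed

lemma hn_has_derivative: "(hn n has_real_derivative - 2 * alpha n x * hn n x) (at x)"
proof -
  let ?F = "\<lambda>y. opoly n y * opoly n y"
  have "((\<lambda>y. wint y (?F y)) has_real_derivative
      wint x (coeffwise_deriv ?F x) - (\<Sum>k=1..m. weight_jump k x * poly (?F x) (tk k x))) (at x)"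
    by (intro wint_has_derivative coeffwise_differentiable_mult coeffwise_differentiable_opoly)
  moreover have "wint x (coeffwise_deriv ?F x) = 0"
  proof -
    let ?D = "coeffwise_deriv (opoly n) x"
    have "wint x (coeffwise_deriv ?F x) = wint x (?D * opoly n x) + wint x (opoly n x * ?D)"
      by (simp only: coeffwise_deriv_mult[OF coeffwise_differentiable_opoly coeffwise_differentiable_opoly]
          wint_add)
    then show ?thesis
      using wint_opoly_orthogonal[OF deg_lt_coeffwise_deriv_opoly[of n x], where x = x]
      by (simp add: wint_commute[of x ?D])
  qed
  moreover have "(\<Sum>k=1..m. weight_jump k x * poly (?F x) (tk k x)) = 2 * alpha n x * hn n x"
    using sum_jumps_opoly_sq[of x n] by (simp add: power2_eq_square)
  moreover have "(\<lambda>y. wint y (?F y)) = hn n" by (auto simp: hn_def)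
  ultimately show ?thesis by simp
qed

lemma poly_opoly_at_tk_has_derivative:
  "((\<lambda>y. poly (opoly n y) (tk k y)) has_real_derivative
     2 * beta n x * poly (opoly_prev n x) (tk k x)) (at x)"
proof (cases n)
  case 0
  then show ?thesis by (simp add: opoly_prev_def beta_def)
next
  case (Suc j)
  have "poly (coeffwise_deriv (opoly n) x) (tk k x) + poly (pderiv (opoly n x)) (tk k x)
      = 2 * beta n x * poly (opoly_prev n x) (tk k x)"
    using arg_cong[OF coeffwise_deriv_opoly_add_pderiv[of n x], of "\<lambda>p. poly p (tk k x)"] Suc
    by (simp add: opoly_prev_def)
  then show ?thesis using poly_at_tk_has_derivative[OF coeffwise_differentiable_opoly, of n k x] by simp
qed

lemma psub_has_derivative:
  assumes "n \<ge> 1"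
  shows "(psub n has_real_derivative 2 * beta n x - real n) (at x)"
proof -
  have "psub n = (\<lambda>y. coeff (opoly n y) (n - 1))" using assms by (auto simp: psub_def)
  moreover have "coeff (coeffwise_deriv (opoly n) x) (n - 1) = 2 * beta n x - real n"
    using arg_cong[OF coeffwise_deriv_opoly_add_pderiv[OF assms, of x], of "\<lambda>p. coeff p (n - 1)"] assms
    by (simp add: coeff_pderiv)
  ultimately show ?thesis
    using coeff_has_derivative_coeffwise_deriv[OF coeffwise_differentiable_opoly, of n "n - 1" x] by simp
qed

lemma weight_jump_has_derivative:
  "(weight_jump k has_real_derivative - 2 * tk k x * weight_jump k x) (at x)"
  unfolding weight_jump_def[abs_def] tk_def
  by (auto intro!: derivative_eq_intros simp: algebra_simps)

end

section \<open>The quantities \<open>R\<^sub>n\<^sub>,\<^sub>k\<close>\<close>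

lemma square_div_twice_eq:
  fixes a t R r b \<rho> :: real
  assumes "R \<noteq> 0" "r\<^sup>2 = b * R * \<rho>"
  shows "(2 * (a - t) * R + 4 * r)\<^sup>2 / (2 * R) = 2 * (a - t)\<^sup>2 * R + 8 * (a - t) * r + 8 * b * \<rho>"
proof -
  have "(2 * (a - t) * R + 4 * r)\<^sup>2 = 4 * (a - t)\<^sup>2 * R * R + 16 * (a - t) * R * r + 16 * r\<^sup>2"
    by (simp add: power2_eq_square algebra_simps)
  also have "\<dots> = 2 * R * (2 * (a - t)\<^sup>2 * R + 8 * (a - t) * r + 8 * b * \<rho>)"
    unfolding assms(2) by (simp add: algebra_simps)
  finally show ?thesis using assms(1) by simp
qed

lemma einterval_min_max_subset:
  "einterval (min 0 (ereal x)) (max 0 (ereal x)) \<subseteq> {min 0 x..max 0 x}"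
  by (cases "0 \<le> x") (auto simp: einterval_iff min_def max_def)

context admissible_step_weight
begin

abbreviation R :: "nat \<Rightarrow> nat \<Rightarrow> real \<Rightarrow> real" where
  "R n k \<equiv> Rnk m c \<omega> n k"

lemma Rnk_eq: "R n k x = weight_jump k x * (poly (opoly n x) (tk k x))\<^sup>2 / hn n x"
  unfolding Rnk_def weight_jump_def hnorm_eq_hn orth_poly_eq_opoly tk_def ..

definition rcross :: "nat \<Rightarrow> nat \<Rightarrow> real \<Rightarrow> real" where
  "rcross n k x =
     weight_jump k x * poly (opoly n x) (tk k x) * poly (opoly (n - 1) x) (tk k x) / hn (n - 1) x"

lemma rcross_sq: "n \<ge> 1 \<Longrightarrow> (rcross n k x)\<^sup>2 = beta n x * R n k x * R (n - 1) k x"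
  using hn_pos[of n x] hn_pos[of "n - 1" x] beta_mult_hn[of n x, symmetric] beta_pos[of n x]
  unfolding rcross_def Rnk_eq by (simp add: field_simps power2_eq_square)

lemma sum_R: "(\<Sum>k=1..m. R n k x) = 2 * alpha n x"
  using sum_jumps_opoly_sq[of x n] hn_pos[of n x] by (simp add: Rnk_eq sum_divide_distrib[symmetric])

lemma sum_rcross: "n \<ge> 1 \<Longrightarrow> (\<Sum>k=1..m. rcross n k x) = 2 * beta n x - real n"
  using sum_jumps_opoly_opoly_pred[of n x] hn_pos[of "n - 1" x]
  by (simp add: rcross_def sum_divide_distrib[symmetric] beta_def field_simps)

lemma sum_tk_rcross:
  "n \<ge> 1 \<Longrightarrow> (\<Sum>k=1..m. tk k x * rcross n k x) = psub n x + 2 * beta n x * (alpha n x + alpha (n - 1) x)"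
  using sum_jumps_tk_opoly_opoly_pred[of n x] hn_pos[of "n - 1" x]
  by (simp add: rcross_def sum_divide_distrib[symmetric] beta_def field_simps mult.assoc)

lemma R_has_derivative:
  assumes n: "n \<ge> 1"
  shows "(R n k has_real_derivative 2 * (alpha n x - tk k x) * R n k x + 4 * rcross n k x) (at x)"
proof -
  let ?P = "\<lambda>y. poly (opoly n y) (tk k y)"
  have "R n k = (\<lambda>y. weight_jump k y * (?P y * ?P y) / hn n y)"
    by (auto simp: Rnk_eq power2_eq_square)
  moreover have "((\<lambda>y. weight_jump k y * (?P y * ?P y) / hn n y) has_real_derivative
     (((- 2 * tk k x * weight_jump k x) * (?P x * ?P x)
        + (2 * (2 * beta n x * poly (opoly (n - 1) x) (tk k x)) * ?P x) * weight_jump k x) * hn n x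
      - (weight_jump k x * (?P x * ?P x)) * (- 2 * alpha n x * hn n x)) / (hn n x * hn n x)) (at x)"
    using hn_pos[of n x] poly_opoly_at_tk_has_derivative[of n k x] n
    by (auto intro!: derivative_eq_intros weight_jump_has_derivative hn_has_derivative
        simp: opoly_prev_def)
  moreover have "(((- 2 * tk k x * weight_jump k x) * (?P x * ?P x)
        + (2 * (2 * beta n x * poly (opoly (n - 1) x) (tk k x)) * ?P x) * weight_jump k x) * hn n x
      - (weight_jump k x * (?P x * ?P x)) * (- 2 * alpha n x * hn n x)) / (hn n x * hn n x)
      = 2 * (alpha n x - tk k x) * R n k x + 4 * rcross n k x"
    using hn_pos[of n x] hn_pos[of "n - 1" x] beta_mult_hn[OF n, of x]
    unfolding Rnk_eq rcross_def by (simp add: field_simps power2_eq_square)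
  ultimately show ?thesis by simp
qed

lemma rcross_has_derivative:
  assumes n: "n \<ge> 1"
  shows "(rcross n k has_real_derivative 2 * beta n x * (R (n - 1) k x - R n k x)) (at x)"
proof -
  let ?P = "\<lambda>y. poly (opoly n y) (tk k y)" and ?Q = "\<lambda>y. poly (opoly (n - 1) y) (tk k y)"
  let ?W = "beta (n - 1) x * poly (opoly_prev (n - 1) x) (tk k x)"
  have W: "?W = tk k x * ?Q x - ?P x - alpha (n - 1) x * ?Q x"
    using poly_opoly_recurrence[of "tk k x" "n - 1" x] n by simp
  have "rcross n k = (\<lambda>y. weight_jump k y * ?P y * ?Q y / hn (n - 1) y)"
    by (auto simp: rcross_def)
  moreover have "((\<lambda>y. weight_jump k y * ?P y * ?Q y / hn (n - 1) y) has_real_derivative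
     ((((- 2 * tk k x * weight_jump k x) * ?P x + (2 * beta n x * ?Q x) * weight_jump k x) * ?Q x
        + (2 * ?W) * (weight_jump k x * ?P x)) * hn (n - 1) x
      - (weight_jump k x * ?P x * ?Q x) * (- 2 * alpha (n - 1) x * hn (n - 1) x))
      / (hn (n - 1) x * hn (n - 1) x)) (at x)"
  proof (rule DERIV_divide[OF DERIV_mult[OF DERIV_mult[OF weight_jump_has_derivative]]
        hn_has_derivative])
    show "(?P has_real_derivative 2 * beta n x * ?Q x) (at x)"
      using poly_opoly_at_tk_has_derivative[of n k x] n by (simp add: opoly_prev_def)
    show "(?Q has_real_derivative 2 * ?W) (at x)"
      using poly_opoly_at_tk_has_derivative[of "n - 1" k x] by (simp add: mult.assoc)
  qed (use hn_pos[of "n - 1" x] in simp)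
  moreover have "((((- 2 * tk k x * weight_jump k x) * ?P x + (2 * beta n x * ?Q x) * weight_jump k x) * ?Q x
        + (2 * ?W) * (weight_jump k x * ?P x)) * hn (n - 1) x
      - (weight_jump k x * ?P x * ?Q x) * (- 2 * alpha (n - 1) x * hn (n - 1) x))
      / (hn (n - 1) x * hn (n - 1) x)
      = 2 * beta n x * (R (n - 1) k x - R n k x)"
    using hn_pos[of n x] hn_pos[of "n - 1" x] beta_mult_hn[OF n, of x, symmetric] beta_pos[OF n, of x]
    unfolding Rnk_eq W by (simp add: field_simps power2_eq_square)
  ultimately show ?thesis by simp
qed

lemma deriv_R:
  "n \<ge> 1 \<Longrightarrow> deriv (R n k) y = 2 * (alpha n y - tk k y) * R n k y + 4 * rcross n k y"
  by (rule DERIV_imp_deriv[OF R_has_derivative])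

lemma alpha_has_derivative:
  assumes n: "n \<ge> 1"
  shows "(alpha n has_real_derivative
    2 * (alpha n x)\<^sup>2 - (\<Sum>j=1..m. tk j x * R n j x) + 2 * (2 * beta n x - real n)) (at x)"
proof (rule DERIV_cong)
  have "((\<lambda>y. (\<Sum>j=1..m. R n j y) / 2) has_real_derivative
      (\<Sum>j=1..m. 2 * (alpha n x - tk j x) * R n j x + 4 * rcross n j x) / 2) (at x)"
    by (intro DERIV_cdivide DERIV_sum R_has_derivative[OF n])
  then show "(alpha n has_real_derivative
      (\<Sum>j=1..m. 2 * (alpha n x - tk j x) * R n j x + 4 * rcross n j x) / 2) (at x)"
    by (rule has_field_derivative_transform_within_open[OF _ open_UNIV UNIV_I]) (unfold sum_R, simp)
  have "(\<Sum>j=1..m. 2 * (alpha n x - tk j x) * R n j x + 4 * rcross n j x)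
      = (2 * alpha n x) * (\<Sum>j=1..m. R n j x) - 2 * (\<Sum>j=1..m. tk j x * R n j x)
        + 4 * (\<Sum>j=1..m. rcross n j x)"
    by (simp add: algebra_simps sum.distrib sum_subtractf sum_distrib_left)
  then show "(\<Sum>j=1..m. 2 * (alpha n x - tk j x) * R n j x + 4 * rcross n j x) / 2
      = 2 * (alpha n x)\<^sup>2 - (\<Sum>j=1..m. tk j x * R n j x) + 2 * (2 * beta n x - real n)"
    unfolding sum_R sum_rcross[OF n] by (simp add: power2_eq_square)
qed

lemma deriv_R_has_derivative:
  assumes n: "n \<ge> 1"
  shows "(deriv (R n k) has_real_derivative
    2 * (2 * (alpha n x)\<^sup>2 - (\<Sum>j=1..m. tk j x * R n j x) + 2 * (2 * beta n x - real n) - 1) * R n k x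
    + deriv (R n k) x * (2 * (alpha n x - tk k x)) + 8 * beta n x * (R (n - 1) k x - R n k x)) (at x)"
proof -
  have "(tk k has_real_derivative 1) (at x)"
    unfolding tk_def[abs_def] by (auto intro!: derivative_eq_intros)
  then have "((\<lambda>y. 2 * (alpha n y - tk k y) * R n k y + 4 * rcross n k y) has_real_derivative
    2 * (2 * (alpha n x)\<^sup>2 - (\<Sum>j=1..m. tk j x * R n j x) + 2 * (2 * beta n x - real n) - 1) * R n k x
    + (2 * (alpha n x - tk k x) * R n k x + 4 * rcross n k x) * (2 * (alpha n x - tk k x))
    + 4 * (2 * beta n x * (R (n - 1) k x - R n k x))) (at x)"
    by (intro DERIV_add DERIV_mult DERIV_cmult DERIV_diff alpha_has_derivative R_has_derivative
        rcross_has_derivative n)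
  moreover have "deriv (R n k) = (\<lambda>y. 2 * (alpha n y - tk k y) * R n k y + 4 * rcross n k y)"
    using deriv_R[OF n] by auto
  ultimately show ?thesis by (simp add: algebra_simps)
qed

lemma deriv_R_sq_div:
  assumes "n \<ge> 1" "R n k x \<noteq> 0"
  shows "(deriv (R n k) x)\<^sup>2 / (2 * R n k x) = 2 * (alpha n x - tk k x)\<^sup>2 * R n k x
    + 8 * (alpha n x - tk k x) * rcross n k x + 8 * beta n x * R (n - 1) k x"
  unfolding deriv_R[OF assms(1)] by (rule square_div_twice_eq[OF assms(2) rcross_sq[OF assms(1)]])

lemma Rnk_ode:
  assumes n: "n \<ge> 1" and R_nz: "R n k x \<noteq> 0"
  shows "\<exists>R2. (deriv (R n k) has_real_derivative R2) (at x) \<and>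
    R2 - (deriv (R n k) x)\<^sup>2 / (2 * R n k x) =
    R n k x * (3/2 * (\<Sum>j=1..m. R n j x)\<^sup>2 - 2 * (\<Sum>j=1..m. (c k + c j + 2 * x) * R n j x)
      + 2 * ((c k + x)\<^sup>2 - 2 * real n - 1))"
proof -
  let ?R2 = "2 * (2 * (alpha n x)\<^sup>2 - (\<Sum>j=1..m. tk j x * R n j x) + 2 * (2 * beta n x - real n) - 1)
    * R n k x + deriv (R n k) x * (2 * (alpha n x - tk k x)) + 8 * beta n x * (R (n - 1) k x - R n k x)"
  have ck_cj: "(\<Sum>j=1..m. (c k + c j + 2 * x) * R n j x)
      = tk k x * (\<Sum>j=1..m. R n j x) + (\<Sum>j=1..m. tk j x * R n j x)"
    by (simp add: tk_def algebra_simps sum.distrib sum_distrib_left)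
  have "?R2 - (deriv (R n k) x)\<^sup>2 / (2 * R n k x) =
    R n k x * (3/2 * (\<Sum>j=1..m. R n j x)\<^sup>2 - 2 * (\<Sum>j=1..m. (c k + c j + 2 * x) * R n j x)
      + 2 * ((c k + x)\<^sup>2 - 2 * real n - 1))"
    unfolding ck_cj deriv_R_sq_div[OF n R_nz]
    unfolding deriv_R[OF n] sum_R
    by (simp add: tk_def power2_eq_square algebra_simps)
  then show ?thesis using deriv_R_has_derivative[OF n] by blast
qed

lemma Rnk_differentiable: "n \<ge> 1 \<Longrightarrow> R n k differentiable (at y)"
  using R_has_derivative real_differentiable_def by blast

lemma Dn_has_derivative: "((\<lambda>y. Dn m c \<omega> n y) has_real_derivative 2 * psub n x * Dn m c \<omega> n x) (at x)"
proof (induction n)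
  case 0
  then show ?case by (simp add: Dn_eq_prod_hn psub_def)
next
  case (Suc n)
  have "((\<lambda>y. Dn m c \<omega> n y * hn n y) has_real_derivative
      2 * psub n x * Dn m c \<omega> n x * hn n x + - 2 * alpha n x * hn n x * Dn m c \<omega> n x) (at x)"
    by (rule DERIV_mult[OF Suc hn_has_derivative])
  then show ?case by (simp add: Dn_eq_prod_hn psub_Suc algebra_simps)
qed

lemma ln_Dn_has_derivative: "((\<lambda>y. ln (Dn m c \<omega> n y)) has_real_derivative 2 * psub n x) (at x)"
  using DERIV_chain2[OF DERIV_ln_divide Dn_has_derivative, OF Dn_pos, of n x] Dn_pos[of n x] by simp

lemma ln_Dhat_has_derivative:
  "((\<lambda>z. ln (Dhat m c \<omega> n z)) has_real_derivative 2 * real n * y + 2 * psub n y) (at y)"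
proof -
  have "ln (Dhat m c \<omega> n z) = real n * z\<^sup>2 + ln (Dn m c \<omega> n z)" for z
    using Dn_pos[of n z] by (simp add: Dhat_def ln_mult)
  moreover have "((\<lambda>z. real n * z\<^sup>2 + ln (Dn m c \<omega> n z)) has_real_derivative
      real n * (2 * y) + 2 * psub n y) (at y)"
    by (intro DERIV_add DERIV_cmult ln_Dn_has_derivative) (auto intro!: derivative_eq_intros)
  ultimately show ?thesis by (simp add: algebra_simps)
qed

lemma Dhat_Toda_ratio:
  assumes n: "n \<ge> 1"
  shows "4 * Dhat m c \<omega> (n + 1) x * Dhat m c \<omega> (n - 1) x / (Dhat m c \<omega> n x)\<^sup>2 = 4 * beta n x"
proof -
  have "Dn m c \<omega> n x = Dn m c \<omega> (n - 1) x * hn (n - 1) x"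
    using n by (cases n) (simp_all add: Dn_eq_prod_hn)
  moreover have "Dn m c \<omega> (n + 1) x = Dn m c \<omega> n x * hn n x" by (simp add: Dn_eq_prod_hn)
  moreover have "exp (real (n + 1) * x\<^sup>2) * exp (real (n - 1) * x\<^sup>2) = (exp (real n * x\<^sup>2))\<^sup>2"
    using n by (simp add: exp_add[symmetric] power2_eq_square of_nat_diff algebra_simps)
  ultimately show ?thesis
    using n Dn_pos[of "n - 1" x] hn_pos[of "n - 1" x] hn_pos[of n x]
    by (simp add: Dhat_def beta_def field_simps power2_eq_square)
qed

lemma ln_Dhat_Toda:
  assumes n: "n \<ge> 1"
  shows "(\<forall>y. (\<lambda>z. ln (Dhat m c \<omega> n z)) differentiable (at y)) \<and>
    ((deriv (\<lambda>z. ln (Dhat m c \<omega> n z))) has_real_derivative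
      4 * Dhat m c \<omega> (n + 1) x * Dhat m c \<omega> (n - 1) x / (Dhat m c \<omega> n x)\<^sup>2) (at x)"
proof
  show "\<forall>y. (\<lambda>z. ln (Dhat m c \<omega> n z)) differentiable (at y)"
    using ln_Dhat_has_derivative real_differentiable_def by blast
  have "deriv (\<lambda>z. ln (Dhat m c \<omega> n z)) = (\<lambda>y. 2 * real n * y + 2 * psub n y)"
    using DERIV_imp_deriv[OF ln_Dhat_has_derivative] by auto
  moreover have "((\<lambda>y. 2 * real n * y + 2 * psub n y) has_real_derivative
      2 * real n * 1 + 2 * (2 * beta n x - real n)) (at x)"
    by (intro DERIV_add DERIV_cmult psub_has_derivative[OF n] DERIV_ident)
  ultimately show "(deriv (\<lambda>z. ln (Dhat m c \<omega> n z)) has_real_derivative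
      4 * Dhat m c \<omega> (n + 1) x * Dhat m c \<omega> (n - 1) x / (Dhat m c \<omega> n x)\<^sup>2) (at x)"
    unfolding Dhat_Toda_ratio[OF n] by simp
qed

text \<open>Pointwise, the integrand of (iii) is \<open>8 p(n) = 4 (ln D\<^sub>n)'\<close>.\<close>

lemma integrand_eq_psub:
  assumes n: "n \<ge> 1" and R_nz: "\<And>k. k \<in> {1..m} \<Longrightarrow> R n k y \<noteq> 0"
  shows "- (\<Sum>k=1..m. (deriv (R n k) y)\<^sup>2 / (2 * R n k y))
      + 1/2 * (\<Sum>k=1..m. R n k y) ^ 3
      + (\<Sum>k=1..m. 2 * (c k + y)\<^sup>2 * R n k y)
      - ((\<Sum>k=1..m. 2 * (c k + y) * R n k y) + 4 * real n) * (\<Sum>j=1..m. R n j y)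
    = 8 * psub n y"
proof -
  let ?a = "alpha n y" and ?b = "beta n y"
  have "(\<Sum>k=1..m. (deriv (R n k) y)\<^sup>2 / (2 * R n k y)) =
     (\<Sum>k=1..m. 2 * ?a\<^sup>2 * R n k y - 4 * ?a * (tk k y * R n k y) + 2 * ((tk k y)\<^sup>2 * R n k y)
        + 8 * ?a * rcross n k y - 8 * (tk k y * rcross n k y) + 8 * ?b * R (n - 1) k y)"
  proof (rule sum.cong[OF refl])
    fix k assume "k \<in> {1..m}"
    then show "(deriv (R n k) y)\<^sup>2 / (2 * R n k y) = 2 * ?a\<^sup>2 * R n k y - 4 * ?a * (tk k y * R n k y)
        + 2 * ((tk k y)\<^sup>2 * R n k y) + 8 * ?a * rcross n k y - 8 * (tk k y * rcross n k y)
        + 8 * ?b * R (n - 1) k y"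
      unfolding deriv_R_sq_div[OF n R_nz[OF \<open>k \<in> {1..m}\<close>]] by (simp add: power2_eq_square algebra_simps)
  qed
  also have "\<dots> = 2 * ?a\<^sup>2 * (\<Sum>k=1..m. R n k y) - 4 * ?a * (\<Sum>k=1..m. tk k y * R n k y)
      + 2 * (\<Sum>k=1..m. (tk k y)\<^sup>2 * R n k y) + 8 * ?a * (\<Sum>k=1..m. rcross n k y)
      - 8 * (\<Sum>k=1..m. tk k y * rcross n k y) + 8 * ?b * (\<Sum>k=1..m. R (n - 1) k y)"
    by (simp only: sum.distrib sum_subtractf sum_distrib_left)
  finally have sq: "(\<Sum>k=1..m. (deriv (R n k) y)\<^sup>2 / (2 * R n k y)) = \<dots>" .
  have tk_sq: "(\<Sum>k=1..m. 2 * (c k + y)\<^sup>2 * R n k y) = 2 * (\<Sum>k=1..m. (tk k y)\<^sup>2 * R n k y)"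
    by (simp add: tk_def sum_distrib_left mult.assoc)
  have tk_lin: "(\<Sum>k=1..m. 2 * (c k + y) * R n k y) = 2 * (\<Sum>k=1..m. tk k y * R n k y)"
    unfolding sum_distrib_left tk_def by (rule sum.cong) simp_all
  show ?thesis
    unfolding sq tk_sq tk_lin sum_R sum_rcross[OF n] sum_tk_rcross[OF n]
    by (simp add: power2_eq_square power3_eq_cube algebra_simps)
qed

lemma Dhat_ratio_eq_exp_integral:
  assumes n: "n \<ge> 1" and R_nz: "\<forall>k\<in>{1..m}. \<forall>y\<in>{min 0 x..max 0 x}. R n k y \<noteq> 0"
  shows "Dhat m c \<omega> n x / Dhat m c \<omega> n 0 =
    exp (real n * x\<^sup>2) * exp (1/4 * (LBINT y=0..x.
      - (\<Sum>k=1..m. (deriv (R n k) y)\<^sup>2 / (2 * R n k y))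
      + 1/2 * (\<Sum>k=1..m. R n k y) ^ 3
      + (\<Sum>k=1..m. 2 * (c k + y)\<^sup>2 * R n k y)
      - ((\<Sum>k=1..m. 2 * (c k + y) * R n k y) + 4 * real n) * (\<Sum>j=1..m. R n j y)))"
    (is "_ = _ * exp (1/4 * ?I)")
proof -
  have "?I = (LBINT y=0..x. 8 * psub n y)"
    using R_nz einterval_min_max_subset[of x]
    by (intro interval_integral_cong integrand_eq_psub[OF n]) blast
  also have "\<dots> = (LBINT y=ereal 0..ereal x. 8 * psub n y)"
    by (simp add: zero_ereal_def)
  also have "\<dots> = 4 * ln (Dn m c \<omega> n x) - 4 * ln (Dn m c \<omega> n 0)"
  proof (rule interval_integral_FTC_finite)
    show "continuous_on {min 0 x..max 0 x} (\<lambda>y. 8 * psub n y)"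
      using DERIV_isCont[OF psub_has_derivative[OF n]]
      by (intro continuous_at_imp_continuous_on continuous_intros) auto
    show "((\<lambda>y. 4 * ln (Dn m c \<omega> n y)) has_vector_derivative 8 * psub n y)
        (at y within {min 0 x..max 0 x})" for y
      using DERIV_cmult[OF ln_Dn_has_derivative, of 4 n y]
      by (simp add: has_real_derivative_iff_has_vector_derivative has_vector_derivative_at_within)
  qed
  finally have "1/4 * ?I = ln (Dn m c \<omega> n x) - ln (Dn m c \<omega> n 0)"
    by simp
  then show ?thesis
    using Dn_pos[of n x] Dn_pos[of n 0] by (simp only: Dhat_def exp_diff exp_ln) simp
qed

end

theorem theorem5p1:
  fixes m n :: nat and c \<omega> :: "nat \<Rightarrow> real"
  assumes "m \<ge> 1" and "c 1 = 0"
    and "\<And>i j. 1 \<le> i \<Longrightarrow> i < j \<Longrightarrow> j \<le> m \<Longrightarrow> c i < c j"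
    and "\<And>l. l \<le> m \<Longrightarrow> (\<Sum>k=0..l. \<omega> k) \<ge> 0"
    and "\<And>x. \<exists>s. weight m c \<omega> x s \<noteq> 0"
    and "n \<ge> 1"
  shows
   "(\<forall>x. (\<forall>y. (\<lambda>z. ln (Dhat m c \<omega> n z)) differentiable (at y)) \<and>
        ((deriv (\<lambda>z. ln (Dhat m c \<omega> n z))) has_real_derivative
           4 * Dhat m c \<omega> (n+1) x * Dhat m c \<omega> (n-1) x / (Dhat m c \<omega> n x)\<^sup>2) (at x))
    \<and> (\<forall>k\<in>{1..m}. \<forall>x. Rnk m c \<omega> n k x \<noteq> 0 \<longrightarrow>
        (\<forall>y. Rnk m c \<omega> n k differentiable (at y)) \<and>
        (\<exists>R2. (deriv (Rnk m c \<omega> n k) has_real_derivative R2) (at x) \<and>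
           R2 - (deriv (Rnk m c \<omega> n k) x)\<^sup>2 / (2 * Rnk m c \<omega> n k x) =
           Rnk m c \<omega> n k x *
             (3/2 * (\<Sum>j=1..m. Rnk m c \<omega> n j x)\<^sup>2
              - 2 * (\<Sum>j=1..m. (c k + c j + 2 * x) * Rnk m c \<omega> n j x)
              + 2 * ((c k + x)\<^sup>2 - 2 * real n - 1))))
    \<and> (\<forall>x. (\<forall>k\<in>{1..m}. \<forall>y\<in>{min 0 x..max 0 x}. Rnk m c \<omega> n k y \<noteq> 0) \<longrightarrow>
        Dhat m c \<omega> n x / Dhat m c \<omega> n 0 =
        exp (real n * x\<^sup>2) * exp (1/4 * (LBINT y=0..x.
            - (\<Sum>k=1..m. (deriv (Rnk m c \<omega> n k) y)\<^sup>2 / (2 * Rnk m c \<omega> n k y))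
            + 1/2 * (\<Sum>k=1..m. Rnk m c \<omega> n k y) ^ 3
            + (\<Sum>k=1..m. 2 * (c k + y)\<^sup>2 * Rnk m c \<omega> n k y)
            - ((\<Sum>k=1..m. 2 * (c k + y) * Rnk m c \<omega> n k y) + 4 * real n)
                * (\<Sum>j=1..m. Rnk m c \<omega> n j y))))"
proof -
  interpret admissible_step_weight m c \<omega>
  proof
    show "c i \<le> c j" if "1 \<le> i" "i \<le> j" "j \<le> m" for i j
      using assms(3)[of i j] that by (cases "i = j") auto
  qed (use assms(4,5) in auto)
  show ?thesis
    using ln_Dhat_Toda[OF assms(6)] Rnk_differentiable[OF assms(6)] Rnk_ode[OF assms(6)]
      Dhat_ratio_eq_exp_integral[OF assms(6)]
    by blast
qed

end
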